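(* Under the assumptions (a) the family of expectation matrices $\{\mathbf M_\theta\}_{\theta\in\mathcal I}$ is good with respect to $\nu$, (b) the process is uniformly allowable, (c) there exists $M<\infty$ with $\frac{\partial^2 f_\theta^{(k)}}{\partial s_j\partial s_i}(\mathbf 1)<M$ for all $\theta\in\mathcal I$, $i,j,k\in[N]$: if $\lambda(\nu,\mathcal M)>0$ then $\mathbf q(\overline{\boldsymbol\theta})<\mathbf 1$ (every coordinate strictly less than $1$) for $\nu$-a.e. $\overline{\boldsymbol\theta}\in\Sigma$.
   Context: $N\ge2$, $\mathcal I$ countable, $\Sigma=\mathcal I^{\mathbb N}$ with shift $\sigma$, $\nu$ a $\sigma$-invariant ergodic probability measure on $\Sigma$; $[N]=\{0,\dots,N-1\}$; $\mathbf 0,\mathbf 1$ all-zero/all-one vectors; vector inequalities componentwise. For $\theta\in\mathcal I$, $\mathbf f_\theta=(f_\theta^{(0)},\dots,f_\theta^{(N-1)})$ with $f_\theta^{(i)}(\mathbf s)=\sum_{\mathbf z\in\mathbb N_0^N}f_\theta^{(i)}[\mathbf z]\mathbf s^{\mathbf z}$ pgfs on $\mathbb N_0^N$. In environment $\overline{\boldsymbol\theta}=(\theta_1,\theta_2,\dots)$, each type-$i$ individual of generation $n-1$ independently produces an offspring vector $\mathbf y$ ($y_j$ = number of type-$j$ children) with probability $f_{\theta_n}^{(i)}[\mathbf y]$; $\mathbf Z_n$ is the sum. $\mathbf q(\overline{\boldsymbol\theta})=\lim_n\mathbf f_{\theta_1}\circ\cdots\circ\mathbf f_{\theta_n}(\mathbf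 0)$ is the vector of extinction probabilities, $q^{(k)}$ starting from one type-$k$ individual. $\mathbf M_\theta(i,k)=\partial f_\theta^{(i)}/\partial s_k(\mathbf 1)$ (finite). Allowable: each row and column has a positive entry. For nonnegative $\mathbf B$: $\|\mathbf B\|$ = sum of entries, $\|\mathbf B\|_1$ = max column sum, $(\mathbf B)_*$ = min column sum. Good: all $\mathbf M_\theta$ allowable, $\int|\log\|\mathbf M_{\theta_1}\|_1|d\nu+\int|\log(\mathbf M_{\theta_1})_*|d\nu<\infty$, and some word $\boldsymbol\theta\in\mathcal I^n$ with $\nu(\{\overline{\boldsymbol\theta}|_n=\boldsymbol\theta\})>0$ has $\mathbf M_{\theta_1}\cdots\mathbf M_{\theta_n}$ strictly positive. $\lambda(\nu,\mathcal M)=\lim_n\frac1n\log\|\mathbf M_{\theta_1}\cdots\mathbf M_{\theta_n}\|$ ($\nu$-a.s. constant). Uniformly allowable: there is $\alpha>0$ with $\inf\{\sum_{\mathbf w:\,w_i\ne0}f_\theta^{(k)}[\mathbf w]:\theta\in\mathcal I,\ \mathbf M_\theta(k,i)>0\}>\alpha$. *)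

theory Defs
  imports "HOL-Probability.Probability"
begin

text \<open>Offspring vectors in N_0^N, represented as functions nat => nat vanishing from N on.\<close>
definition vecs :: "nat \<Rightarrow> (nat \<Rightarrow> nat) set" where
  "vecs N = {z. \<forall>j. N \<le> j \<longrightarrow> z j = 0}"

definition offspring_law :: "nat \<Rightarrow> ((nat \<Rightarrow> nat) \<Rightarrow> real) \<Rightarrow> bool" where
  "offspring_law N p \<longleftrightarrow> (\<forall>z\<in>vecs N. 0 \<le> p z) \<and> (p has_sum 1) (vecs N)"

definition pgf :: "nat \<Rightarrow> ((nat \<Rightarrow> nat) \<Rightarrow> real) \<Rightarrow> (nat \<Rightarrow> real) \<Rightarrow> real" where
  "pgf N p s = (\<Sum>\<^sub>\<infinity> z\<in>vecs N. p z * (\<Prod>j<N. s j ^ z j))"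

text \<open>The vector of pgfs f_theta = (f_theta^(0),...,f_theta^(N-1)); f theta i z = f_theta^(i)[z].\<close>
definition pgf_vec :: "nat \<Rightarrow> ('i \<Rightarrow> nat \<Rightarrow> (nat \<Rightarrow> nat) \<Rightarrow> real) \<Rightarrow> 'i \<Rightarrow> (nat \<Rightarrow> real) \<Rightarrow> nat \<Rightarrow> real" where
  "pgf_vec N f \<theta> s = (\<lambda>i. if i < N then pgf N (f \<theta> i) s else 0)"

fun pgf_comp :: "nat \<Rightarrow> ('i \<Rightarrow> nat \<Rightarrow> (nat \<Rightarrow> nat) \<Rightarrow> real) \<Rightarrow> 'i list \<Rightarrow> (nat \<Rightarrow> real) \<Rightarrow> nat \<Rightarrow> real" where
  "pgf_comp N f [] s = s"
| "pgf_comp N f (\<theta> # ws) s = pgf_vec N f \<theta> (pgf_comp N f ws s)"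

text \<open>Extinction probability q^(k)(omega), environment omega = (omega 0, omega 1, ...) = (theta_1, theta_2, ...).\<close>
definition extinction_prob :: "nat \<Rightarrow> ('i \<Rightarrow> nat \<Rightarrow> (nat \<Rightarrow> nat) \<Rightarrow> real) \<Rightarrow> (nat \<Rightarrow> 'i) \<Rightarrow> nat \<Rightarrow> real" where
  "extinction_prob N f \<omega> k = lim (\<lambda>n. pgf_comp N f (map \<omega> [0..<n]) (\<lambda>_. 0) k)"

text \<open>Mean matrix M_theta(i,k) = d f_theta^(i) / d s_k (1) = sum_z z_k f_theta^(i)[z].\<close>
definition mean_matrix :: "nat \<Rightarrow> ('i \<Rightarrow> nat \<Rightarrow> (nat \<Rightarrow> nat) \<Rightarrow> real) \<Rightarrow> 'i \<Rightarrow> nat \<Rightarrow> nat \<Rightarrow> real" where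
  "mean_matrix N f \<theta> i k = (\<Sum>\<^sub>\<infinity> z\<in>vecs N. real (z k) * f \<theta> i z)"

text \<open>Second partial derivative d^2 f_theta^(k) / ds_j ds_i at 1: sum_z z_i (z_j - [i=j]) f_theta^(k)[z].\<close>
definition second_deriv_term :: "nat \<Rightarrow> nat \<Rightarrow> ('i \<Rightarrow> nat \<Rightarrow> (nat \<Rightarrow> nat) \<Rightarrow> real) \<Rightarrow> 'i \<Rightarrow> nat \<Rightarrow> (nat \<Rightarrow> nat) \<Rightarrow> real" where
  "second_deriv_term i j f \<theta> k z = real (z i) * (real (z j) - (if i = j then 1 else 0)) * f \<theta> k z"

definition second_deriv :: "nat \<Rightarrow> ('i \<Rightarrow> nat \<Rightarrow> (nat \<Rightarrow> nat) \<Rightarrow> real) \<Rightarrow> 'i \<Rightarrow> nat \<Rightarrow> nat \<Rightarrow> nat \<Rightarrow> real" where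
  "second_deriv N f \<theta> k i j = (\<Sum>\<^sub>\<infinity> z\<in>vecs N. second_deriv_term i j f \<theta> k z)"

text \<open>N x N matrices as nat => nat => real, indices in [N].\<close>
definition mat_mult :: "nat \<Rightarrow> (nat \<Rightarrow> nat \<Rightarrow> real) \<Rightarrow> (nat \<Rightarrow> nat \<Rightarrow> real) \<Rightarrow> nat \<Rightarrow> nat \<Rightarrow> real" where
  "mat_mult N A B = (\<lambda>i k. \<Sum>j<N. A i j * B j k)"

definition mat_id :: "nat \<Rightarrow> nat \<Rightarrow> real" where
  "mat_id = (\<lambda>i k. if i = k then 1 else 0)"

fun Mprod :: "nat \<Rightarrow> ('i \<Rightarrow> nat \<Rightarrow> nat \<Rightarrow> real) \<Rightarrow> 'i list \<Rightarrow> nat \<Rightarrow> nat \<Rightarrow> real" where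
  "Mprod N M [] = mat_id"
| "Mprod N M (\<theta> # ws) = mat_mult N (M \<theta>) (Mprod N M ws)"

definition mat_sum :: "nat \<Rightarrow> (nat \<Rightarrow> nat \<Rightarrow> real) \<Rightarrow> real" where
  "mat_sum N B = (\<Sum>i<N. \<Sum>k<N. B i k)"

definition col_max :: "nat \<Rightarrow> (nat \<Rightarrow> nat \<Rightarrow> real) \<Rightarrow> real" where
  "col_max N B = Max ((\<lambda>k. \<Sum>i<N. B i k) ` {..<N})"

definition col_min :: "nat \<Rightarrow> (nat \<Rightarrow> nat \<Rightarrow> real) \<Rightarrow> real" where
  "col_min N B = Min ((\<lambda>k. \<Sum>i<N. B i k) ` {..<N})"

definition allowable :: "nat \<Rightarrow> (nat \<Rightarrow> nat \<Rightarrow> real) \<Rightarrow> bool" where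
  "allowable N B \<longleftrightarrow> (\<forall>i<N. \<exists>k<N. B i k > 0) \<and> (\<forall>k<N. \<exists>i<N. B i k > 0)"

definition strictly_pos :: "nat \<Rightarrow> (nat \<Rightarrow> nat \<Rightarrow> real) \<Rightarrow> bool" where
  "strictly_pos N B \<longleftrightarrow> (\<forall>i<N. \<forall>k<N. B i k > 0)"

definition good :: "nat \<Rightarrow> (nat \<Rightarrow> 'i) measure \<Rightarrow> ('i \<Rightarrow> nat \<Rightarrow> nat \<Rightarrow> real) \<Rightarrow> bool" where
  "good N \<nu> M \<longleftrightarrow>
     (\<forall>\<theta>. allowable N (M \<theta>))
   \<and> integrable \<nu> (\<lambda>\<omega>. \<bar>ln (col_max N (M (\<omega> 0)))\<bar>)
   \<and> integrable \<nu> (\<lambda>\<omega>. \<bar>ln (col_min N (M (\<omega> 0)))\<bar>)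
   \<and> (\<exists>ws. ws \<noteq> [] \<and> measure \<nu> {\<omega>\<in>space \<nu>. \<forall>j<length ws. \<omega> j = ws ! j} > 0
            \<and> strictly_pos N (Mprod N M ws))"

definition unif_allowable :: "nat \<Rightarrow> ('i \<Rightarrow> nat \<Rightarrow> (nat \<Rightarrow> nat) \<Rightarrow> real) \<Rightarrow> bool" where
  "unif_allowable N f \<longleftrightarrow> (\<exists>\<alpha>>0.
     Inf {(\<Sum>\<^sub>\<infinity> w\<in>{w\<in>vecs N. w i \<noteq> 0}. f \<theta> k w) | \<theta> k i.
            k < N \<and> i < N \<and> mean_matrix N f \<theta> k i > 0} > \<alpha>)"

definition shift :: "(nat \<Rightarrow> 'a) \<Rightarrow> nat \<Rightarrow> 'a" where
  "shift \<omega> = (\<lambda>n. \<omega> (Suc n))"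

definition ergodic_shift_measure :: "(nat \<Rightarrow> 'i) measure \<Rightarrow> bool" where
  "ergodic_shift_measure \<nu> \<longleftrightarrow>
     prob_space \<nu>
   \<and> sets \<nu> = sets (PiM UNIV (\<lambda>_::nat. count_space (UNIV :: 'i set)))
   \<and> shift \<in> measurable \<nu> \<nu>
   \<and> (\<forall>A\<in>sets \<nu>. emeasure \<nu> (shift -` A \<inter> space \<nu>) = emeasure \<nu> A)
   \<and> (\<forall>A\<in>sets \<nu>. shift -` A \<inter> space \<nu> = A \<longrightarrow> emeasure \<nu> A = 0 \<or> emeasure \<nu> A = 1)"

end

theory Submission
  imports Defs
begin

text \<open>
  Write \<open>P\<^sub>n\<close> for the product \<open>M(\<theta>\<^sub>1) \<cdots> M(\<theta>\<^sub>n)\<close> and \<open>\<parallel>A\<parallel>\<close> for the sum of the entries of \<open>A\<close>.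
  A second-moment estimate for one generating function, \<open>1 - f(1 - u) \<ge> y / (1 + K y)\<close> with
  \<open>y = M u\<close>, iterates to a lower bound for the probability that a type-\<open>i\<close> ancestor has
  descendants in generation \<open>n\<close>: the \<open>i\<close>-th row sum of \<open>P\<^sub>n\<close> divided by
  \<open>1 + K \<Sum>\<^sub>k\<^sub><\<^sub>n \<parallel>M(\<theta>\<^sub>k\<^sub>+\<^sub>1) \<cdots> M(\<theta>\<^sub>n)\<parallel>\<close>. The bound on second derivatives together with
  uniform allowability (every positive mean is at least \<open>\<alpha>\<close>) gives \<open>K = (2 M + 1) / \<alpha>\<^sup>2\<close>.

  It remains to show that in almost every environment these suffix masses add up to
  \<open>O(\<parallel>P\<^sub>n\<parallel>)\<close> and every row of \<open>P\<^sub>n\<close> is a fixed fraction of \<open>\<parallel>P\<^sub>n\<parallel>\<close>. Both come from a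
  word \<open>w\<close> of positive probability whose product is strictly positive. By ergodicity \<open>w\<close>
  occurs infinitely often, and by stationarity and Borel--Cantelli the gap after an occurrence
  at time \<open>n\<close> is \<open>o(n)\<close>. Every column of every \<open>M(\<theta>)\<close> has an entry at least \<open>a > 0\<close>, so a
  gap of length \<open>o(n)\<close> costs only a factor \<open>a\<close> to the power \<open>o(n)\<close>, which the growth
  \<open>\<parallel>P\<^sub>n\<parallel> \<ge> exp(\<lambda> n / 2)\<close> absorbs. Splitting \<open>P\<^sub>m\<close> at the last occurrence of \<open>w\<close> before
  time \<open>n\<close> thus shows that the suffix from time \<open>n\<close> carries at most \<open>C \<rho>\<^sup>n \<parallel>P\<^sub>m\<parallel>\<close>, \<open>\<rho> < 1\<close>.
\<close>

section \<open>Probability generating functions\<close>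

lemma has_sum_sum:
  fixes f :: "'b \<Rightarrow> 'a \<Rightarrow> real"
  assumes "finite I" "\<And>i. i \<in> I \<Longrightarrow> (f i has_sum a i) A"
  shows "((\<lambda>x. \<Sum>i\<in>I. f i x) has_sum (\<Sum>i\<in>I. a i)) A"
  using assms by (induction I rule: finite_induct) (auto intro: has_sum_add)

lemma has_sum_diff:
  fixes f g :: "'a \<Rightarrow> real"
  assumes "(f has_sum a) A" "(g has_sum b) A"
  shows "((\<lambda>x. f x - g x) has_sum (a - b)) A"
proof -
  have "((\<lambda>x. f x + (-1) * g x) has_sum (a + (-1) * b)) A"
    by (intro has_sum_add assms has_sum_cmult_right)
  then show ?thesis by simp
qed

definition unit_cube :: "nat \<Rightarrow> (nat \<Rightarrow> real) \<Rightarrow> bool" where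
  "unit_cube N s \<longleftrightarrow> (\<forall>j<N. 0 \<le> s j \<and> s j \<le> 1)"

lemma unit_cube_monomial:
  assumes "unit_cube N s"
  shows "0 \<le> (\<Prod>j<N. s j ^ z j)" "(\<Prod>j<N. s j ^ z j) \<le> (1::real)"
  using assms unfolding unit_cube_def by (auto intro!: prod_nonneg prod_le_1 power_le_one)

lemma offspring_law_nonneg: "offspring_law N p \<Longrightarrow> z \<in> vecs N \<Longrightarrow> 0 \<le> p z"
  unfolding offspring_law_def by auto

lemma offspring_law_has_sum: "offspring_law N p \<Longrightarrow> (p has_sum 1) (vecs N)"
  unfolding offspring_law_def by auto

lemma offspring_law_summable: "offspring_law N p \<Longrightarrow> p summable_on vecs N"
  using offspring_law_has_sum summable_on_def by blast

lemma pgf_summable: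
  assumes "offspring_law N p" "unit_cube N s"
  shows "(\<lambda>z. p z * (\<Prod>j<N. s j ^ z j)) summable_on vecs N"
  using unit_cube_monomial[OF assms(2)] offspring_law_nonneg[OF assms(1)]
  by (intro summable_on_comparison_test[OF offspring_law_summable[OF assms(1)]])
     (auto simp: mult_left_le)

lemma pgf_nonneg: "offspring_law N p \<Longrightarrow> unit_cube N s \<Longrightarrow> 0 \<le> pgf N p s"
  unfolding pgf_def using unit_cube_monomial offspring_law_nonneg by (intro infsum_nonneg) auto

lemma pgf_mono:
  assumes "offspring_law N p" "unit_cube N s" "unit_cube N t" "\<And>j. j < N \<Longrightarrow> s j \<le> t j"
  shows "pgf N p s \<le> pgf N p t"
  unfolding pgf_def
proof (intro infsum_mono pgf_summable assms)
  fix z assume "z \<in> vecs N"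
  moreover have "(\<Prod>j<N. s j ^ z j) \<le> (\<Prod>j<N. t j ^ z j)"
    using assms(2,4) unfolding unit_cube_def by (intro prod_mono) (auto intro: power_mono)
  ultimately show "p z * (\<Prod>j<N. s j ^ z j) \<le> p z * (\<Prod>j<N. t j ^ z j)"
    using offspring_law_nonneg[OF assms(1)] by (simp add: mult_left_mono)
qed

lemma pgf_le_1:
  assumes "offspring_law N p" "unit_cube N s"
  shows "pgf N p s \<le> 1"
proof -
  have "pgf N p s \<le> pgf N p (\<lambda>_. 1)"
    using assms by (intro pgf_mono) (auto simp: unit_cube_def)
  also have "\<dots> = 1"
    using offspring_law_has_sum[OF assms(1)] unfolding pgf_def by (simp add: infsumI)
  finally show ?thesis .
qed

lemma has_sum_one_minus_pgf:
  assumes "offspring_law N p" "unit_cube N s"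
  shows "((\<lambda>z. p z * (1 - (\<Prod>j<N. s j ^ z j))) has_sum (1 - pgf N p s)) (vecs N)"
  using has_sum_diff[OF offspring_law_has_sum[OF assms(1)] pgf_summable[OF assms, unfolded summable_iff_has_sum_infsum]]
  unfolding pgf_def by (simp add: right_diff_distrib)

lemma pgf_comp_append: "pgf_comp N f (xs @ ys) s = pgf_comp N f xs (pgf_comp N f ys s)"
  by (induction xs) auto

lemma pgf_comp_unit_cube:
  assumes "\<And>\<theta> i. i < N \<Longrightarrow> offspring_law N (f \<theta> i)" "unit_cube N s"
  shows "unit_cube N (pgf_comp N f ws s)"
  by (induction ws) (use assms pgf_nonneg pgf_le_1 in \<open>auto simp: unit_cube_def pgf_vec_def\<close>)

lemma pgf_comp_mono:
  assumes laws: "\<And>\<theta> i. i < N \<Longrightarrow> offspring_law N (f \<theta> i)"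
    and "unit_cube N s" "unit_cube N t" "\<And>j. j < N \<Longrightarrow> s j \<le> t j" "i < N"
  shows "pgf_comp N f ws s i \<le> pgf_comp N f ws t i"
  using assms(5)
proof (induction ws arbitrary: i)
  case (Cons \<theta> ws)
  then show ?case
    using laws pgf_comp_unit_cube[of N f, OF laws assms(2)] pgf_comp_unit_cube[of N f, OF laws assms(3)]
    by (auto simp: pgf_vec_def intro!: pgf_mono)
qed (use assms(4) in simp)

lemma extinction_prob_le:
  assumes laws: "\<And>\<theta> i. i < N \<Longrightarrow> offspring_law N (f \<theta> i)" and k: "k < N"
    and bound: "eventually (\<lambda>n. pgf_comp N f (map \<omega> [0..<n]) (\<lambda>_. 0) k \<le> c) sequentially"
  shows "extinction_prob N f \<omega> k \<le> c"
proof -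
  let ?q = "\<lambda>n. pgf_comp N f (map \<omega> [0..<n]) (\<lambda>_. 0) k"
  have zero: "unit_cube N (\<lambda>_. 0)" by (simp add: unit_cube_def)
  have "incseq ?q"
  proof (rule incseq_SucI)
    fix n
    have "pgf_comp N f (map \<omega> [0..<n]) (\<lambda>_. 0) k
          \<le> pgf_comp N f (map \<omega> [0..<n]) (pgf_comp N f [\<omega> n] (\<lambda>_. 0)) k"
      using pgf_comp_unit_cube[of N f, OF laws zero, where ws = "[\<omega> n]"] k
      by (intro pgf_comp_mono[of N f, OF laws zero]) (auto simp: unit_cube_def)
    then show "?q n \<le> ?q (Suc n)" by (simp add: pgf_comp_append)
  qed
  moreover have "?q n \<le> 1" for n
    using pgf_comp_unit_cube[of N f, OF laws zero] k unfolding unit_cube_def by blast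
  ultimately obtain q where "?q \<longlonglongrightarrow> q" using incseq_convergent by blast
  then show ?thesis
    unfolding extinction_prob_def using bound by (simp add: limI LIMSEQ_le_const2 eventually_sequentially)
qed

section \<open>A second-moment bound for one generation\<close>

definition mean :: "nat \<Rightarrow> ((nat \<Rightarrow> nat) \<Rightarrow> real) \<Rightarrow> nat \<Rightarrow> real" where
  "mean N p j = (\<Sum>\<^sub>\<infinity>z\<in>vecs N. real (z j) * p z)"

lemma mean_matrix_eq_mean: "mean_matrix N f \<theta> i j = mean N (f \<theta> i) j"
  unfolding mean_matrix_def mean_def ..

lemma one_minus_exp_ge:
  fixes Y a :: real
  assumes "0 \<le> Y" "0 \<le> a"
  shows "2 * a * Y - a\<^sup>2 * (Y + Y\<^sup>2) \<le> 1 - exp (- Y)"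
proof -
  define b where "b = 1 / (1 + Y)"
  have b: "(1 + Y) * b = 1" using assms unfolding b_def by simp
  have "exp (- Y) * (1 + Y) \<le> exp (- Y) * exp Y"
    by (intro mult_left_mono exp_ge_add_one_self) auto
  then have "Y * b \<le> 1 - exp (- Y)"
    using assms unfolding b_def by (simp add: exp_minus field_simps)
  moreover have "Y * b - (2 * a * Y - a\<^sup>2 * (Y + Y\<^sup>2)) = Y * (1 + Y) * (b - a)\<^sup>2"
  proof -
    have "Y * (1 + Y) * (b - a)\<^sup>2
          = Y * b * ((1 + Y) * b) - 2 * a * Y * ((1 + Y) * b) + a\<^sup>2 * (Y + Y\<^sup>2)"
      by (simp add: power2_eq_square algebra_simps)
    then show ?thesis unfolding b by simp
  qed
  moreover have "0 \<le> Y * (1 + Y) * (b - a)\<^sup>2"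
    using assms by simp
  ultimately show ?thesis by linarith
qed

lemma prod_one_minus_power_le_exp:
  assumes "unit_cube N u"
  shows "(\<Prod>j<N. (1 - u j) ^ z j) \<le> exp (- (\<Sum>j<N. real (z j) * u j))"
proof -
  have "0 \<le> 1 - u j \<and> 1 - u j \<le> exp (- u j)" if "j < N" for j
    using assms exp_ge_add_one_self[of "- u j"] that unfolding unit_cube_def by auto
  then have "(\<Prod>j<N. (1 - u j) ^ z j) \<le> (\<Prod>j<N. exp (- u j) ^ z j)"
    by (intro prod_mono) (auto intro: power_mono)
  also have "\<dots> = (\<Prod>j<N. exp (- (real (z j) * u j)))"
    by (intro prod.cong refl) (simp add: exp_of_nat_mult[symmetric])
  also have "\<dots> = exp (- (\<Sum>j<N. real (z j) * u j))"
    by (simp add: exp_sum sum_negf[symmetric])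
  finally show ?thesis .
qed

locale bounded_moment_law =
  fixes N :: nat and p :: "(nat \<Rightarrow> nat) \<Rightarrow> real" and B \<alpha> :: real
  assumes law: "offspring_law N p"
    and mean_summable: "\<And>j. j < N \<Longrightarrow> (\<lambda>z. real (z j) * p z) summable_on vecs N"
    and factorial_moment_summable:
      "\<And>j. j < N \<Longrightarrow> (\<lambda>z. real (z j) * (real (z j) - 1) * p z) summable_on vecs N"
    and factorial_moment_le:
      "\<And>j. j < N \<Longrightarrow> (\<Sum>\<^sub>\<infinity>z\<in>vecs N. real (z j) * (real (z j) - 1) * p z) \<le> B"
    and mean_ge: "\<And>j. j < N \<Longrightarrow> 0 < mean N p j \<Longrightarrow> \<alpha> \<le> mean N p j"
    and \<alpha>_pos: "0 < \<alpha>"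
begin

lemma nonneg: "z \<in> vecs N \<Longrightarrow> 0 \<le> p z"
  using offspring_law_nonneg[OF law] .

lemma mean_has_sum: "j < N \<Longrightarrow> ((\<lambda>z. real (z j) * p z) has_sum mean N p j) (vecs N)"
  using mean_summable unfolding mean_def by (simp add: has_sum_infsum)

lemma mean_nonneg: "0 \<le> mean N p j"
  unfolding mean_def using nonneg by (intro infsum_nonneg) auto

lemma mean_eq_0_vanishes:
  assumes "j < N" "mean N p j = 0" "z \<in> vecs N"
  shows "real (z j) * p z = 0"
  using nonneg_infsum_le_0D[of "\<lambda>z. real (z j) * p z" "vecs N"] assms mean_summable nonneg
  unfolding mean_def by auto

lemma bound_nonneg:
  assumes "0 < N"
  shows "0 \<le> B"
proof -
  have falling: "0 \<le> real n * (real n - 1)" for n :: nat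
    by (cases n) auto
  have "0 \<le> (\<Sum>\<^sub>\<infinity>z\<in>vecs N. real (z 0) * (real (z 0) - 1) * p z)"
    using nonneg by (intro infsum_nonneg mult_nonneg_nonneg[OF falling]) auto
  then show ?thesis using factorial_moment_le[OF assms] by linarith
qed

lemma mixed_moment:
  assumes "j < N" "l < N"
  shows "(\<lambda>z. real (z j) * real (z l) * p z) summable_on vecs N"
    and "(\<Sum>\<^sub>\<infinity>z\<in>vecs N. real (z j) * real (z l) * p z) \<le> 2 * B + 1"
proof -
  let ?g = "\<lambda>z. real (z j) * (real (z j) - 1) * p z + real (z l) * (real (z l) - 1) * p z + p z"
  have g: "(?g has_sum (infsum (\<lambda>z. real (z j) * (real (z j) - 1) * p z) (vecs N)
                      + infsum (\<lambda>z. real (z l) * (real (z l) - 1) * p z) (vecs N) + 1)) (vecs N)"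
    using assms factorial_moment_summable offspring_law_has_sum[OF law]
    by (intro has_sum_add) (simp_all add: has_sum_infsum)
  have pointwise: "0 \<le> real (z j) * real (z l) * p z \<and> real (z j) * real (z l) * p z \<le> ?g z"
    if "z \<in> vecs N" for z
  proof -
    have "0 \<le> (real (z j) - real (z l))\<^sup>2 + (real (z j) - 1)\<^sup>2 + (real (z l) - 1)\<^sup>2"
      by simp
    then have "real (z j) * real (z l) \<le> real (z j) * (real (z j) - 1) + real (z l) * (real (z l) - 1) + 1"
      by (simp add: power2_eq_square algebra_simps)
    then have "real (z j) * real (z l) * p z
               \<le> (real (z j) * (real (z j) - 1) + real (z l) * (real (z l) - 1) + 1) * p z"
      by (rule mult_right_mono) (rule nonneg[OF that])
    moreover have "0 \<le> real (z j) * real (z l) * p z"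
      using nonneg[OF that] by simp
    ultimately show ?thesis
      by (simp only: distrib_right mult_1_left)
  qed
  show sm: "(\<lambda>z. real (z j) * real (z l) * p z) summable_on vecs N"
    by (intro summable_on_comparison_test[OF has_sum_imp_summable[OF g]]) (use pointwise in blast)+
  have "(\<Sum>\<^sub>\<infinity>z\<in>vecs N. real (z j) * real (z l) * p z)
        \<le> infsum (\<lambda>z. real (z j) * (real (z j) - 1) * p z) (vecs N)
          + infsum (\<lambda>z. real (z l) * (real (z l) - 1) * p z) (vecs N) + 1"
    by (rule has_sum_mono[OF sm[unfolded summable_iff_has_sum_infsum] g]) (use pointwise in blast)
  then show "(\<Sum>\<^sub>\<infinity>z\<in>vecs N. real (z j) * real (z l) * p z) \<le> 2 * B + 1"
    using factorial_moment_le[OF assms(1)] factorial_moment_le[OF assms(2)] by linarith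
qed

text \<open>This is where uniform allowability enters: a positive mean is at least \<open>\<alpha>\<close>.\<close>
lemma mixed_moment_le_mean:
  assumes "j < N" "l < N"
  shows "(\<Sum>\<^sub>\<infinity>z\<in>vecs N. real (z j) * real (z l) * p z) \<le> (2 * B + 1) / \<alpha>\<^sup>2 * mean N p j * mean N p l"
proof (cases "mean N p j = 0 \<or> mean N p l = 0")
  case True
  have "real (z j) * real (z l) * p z = 0" if "z \<in> vecs N" for z
    using True mean_eq_0_vanishes[OF assms(1) _ that] mean_eq_0_vanishes[OF assms(2) _ that]
    by (metis mult.commute mult.left_commute mult_zero_right)
  then have "(\<Sum>\<^sub>\<infinity>z\<in>vecs N. real (z j) * real (z l) * p z) = 0"
    by (rule infsum_0)
  then show ?thesis using True by (elim disjE) simp_all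
next
  case False
  then have "0 < mean N p j" "0 < mean N p l"
    using mean_nonneg by (simp_all add: order_less_le)
  then have "\<alpha> \<le> mean N p j" "\<alpha> \<le> mean N p l"
    using mean_ge assms by simp_all
  then have "\<alpha>\<^sup>2 \<le> mean N p j * mean N p l"
    using \<alpha>_pos by (simp add: power2_eq_square mult_mono)
  moreover have "0 \<le> 2 * B + 1" using bound_nonneg assms by simp
  ultimately have "(2 * B + 1) * \<alpha>\<^sup>2 \<le> (2 * B + 1) * (mean N p j * mean N p l)"
    by (rule mult_left_mono)
  then have "2 * B + 1 \<le> (2 * B + 1) / \<alpha>\<^sup>2 * (mean N p j * mean N p l)"
    using \<alpha>_pos by (simp add: field_simps)
  then show ?thesis using mixed_moment(2)[OF assms] by (simp add: mult.assoc)
qed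

lemma has_sum_linear_form:
  "((\<lambda>z. p z * (\<Sum>j<N. real (z j) * u j)) has_sum (\<Sum>j<N. mean N p j * u j)) (vecs N)"
proof -
  have "((\<lambda>z. \<Sum>j<N. u j * (real (z j) * p z)) has_sum (\<Sum>j<N. u j * mean N p j)) (vecs N)"
    by (intro has_sum_sum has_sum_cmult_right mean_has_sum) auto
  then show ?thesis
    by (simp add: sum_distrib_left mult_ac)
qed

lemma has_sum_quadratic_form:
  assumes u: "\<And>j. j < N \<Longrightarrow> 0 \<le> u j"
  obtains S where "((\<lambda>z. p z * (\<Sum>j<N. real (z j) * u j)\<^sup>2) has_sum S) (vecs N)"
    and "S \<le> (2 * B + 1) / \<alpha>\<^sup>2 * (\<Sum>j<N. mean N p j * u j)\<^sup>2"
proof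
  let ?e = "\<lambda>j l. \<Sum>\<^sub>\<infinity>z\<in>vecs N. real (z j) * real (z l) * p z"
  have "((\<lambda>z. \<Sum>j<N. \<Sum>l<N. u j * u l * (real (z j) * real (z l) * p z))
         has_sum (\<Sum>j<N. \<Sum>l<N. u j * u l * ?e j l)) (vecs N)"
    using mixed_moment(1) by (intro has_sum_sum has_sum_cmult_right) (auto simp: has_sum_infsum)
  moreover have "(\<Sum>j<N. \<Sum>l<N. u j * u l * (real (z j) * real (z l) * p z))
                 = p z * (\<Sum>j<N. real (z j) * u j)\<^sup>2" for z
    unfolding power2_eq_square sum_product by (simp add: sum_distrib_left algebra_simps)
  ultimately show "((\<lambda>z. p z * (\<Sum>j<N. real (z j) * u j)\<^sup>2) has_sum (\<Sum>j<N. \<Sum>l<N. u j * u l * ?e j l)) (vecs N)"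
    by simp
  have "(\<Sum>j<N. \<Sum>l<N. u j * u l * ?e j l)
        \<le> (\<Sum>j<N. \<Sum>l<N. u j * u l * ((2 * B + 1) / \<alpha>\<^sup>2 * mean N p j * mean N p l))"
    using u by (intro sum_mono mult_left_mono mixed_moment_le_mean) auto
  also have "\<dots> = (2 * B + 1) / \<alpha>\<^sup>2 * (\<Sum>j<N. mean N p j * u j)\<^sup>2"
    unfolding power2_eq_square by (simp add: sum_product sum_distrib_left algebra_simps)
  finally show "(\<Sum>j<N. \<Sum>l<N. u j * u l * ?e j l) \<le> (2 * B + 1) / \<alpha>\<^sup>2 * (\<Sum>j<N. mean N p j * u j)\<^sup>2" .
qed

text \<open>A second-moment bound: integrate \<open>2 a Y - a\<^sup>2 (Y + Y\<^sup>2) \<le> 1 - exp (- Y)\<close>, where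
  \<open>Y = \<Sum>\<^sub>j z\<^sub>j u\<^sub>j\<close>, and choose \<open>a = 1 / (1 + K y)\<close>.\<close>
lemma one_minus_pgf_ge:
  assumes u: "unit_cube N u" and N: "0 < N"
  defines "y \<equiv> \<Sum>j<N. mean N p j * u j"
  shows "y / (1 + (2 * B + 1) / \<alpha>\<^sup>2 * y) \<le> 1 - pgf N p (\<lambda>j. 1 - u j)"
proof -
  define K where "K = (2 * B + 1) / \<alpha>\<^sup>2"
  define Y where "Y z = (\<Sum>j<N. real (z j) * u j)" for z :: "nat \<Rightarrow> nat"
  define a where "a = 1 / (1 + K * y)"
  have u0: "j < N \<Longrightarrow> 0 \<le> u j" for j using u unfolding unit_cube_def by auto
  have "0 \<le> K * y"
    unfolding K_def y_def using bound_nonneg[OF N] u0 mean_nonneg by (intro mult_nonneg_nonneg sum_nonneg) auto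
  then have a: "0 \<le> a" "a * (1 + K * y) = 1" unfolding a_def by auto
  obtain S where second: "((\<lambda>z. p z * (Y z)\<^sup>2) has_sum S) (vecs N)" and S: "S \<le> K * y\<^sup>2"
    using has_sum_quadratic_form[of u, OF u0] unfolding Y_def K_def y_def by blast
  have "((\<lambda>z. 2 * a * (p z * Y z) - a\<^sup>2 * (p z * Y z) - a\<^sup>2 * (p z * (Y z)\<^sup>2))
         has_sum (2 * a * y - a\<^sup>2 * y - a\<^sup>2 * S)) (vecs N)"
    unfolding Y_def y_def by (intro has_sum_diff has_sum_cmult_right has_sum_linear_form second[unfolded Y_def])
  moreover have "2 * a * (p z * Y z) - a\<^sup>2 * (p z * Y z) - a\<^sup>2 * (p z * (Y z)\<^sup>2)
                 \<le> p z * (1 - (\<Prod>j<N. (1 - u j) ^ z j))" if "z \<in> vecs N" for z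
  proof -
    have "2 * a * Y z - a\<^sup>2 * (Y z + (Y z)\<^sup>2) \<le> 1 - exp (- Y z)"
      using u0 a(1) unfolding Y_def by (intro one_minus_exp_ge sum_nonneg) auto
    also have "\<dots> \<le> 1 - (\<Prod>j<N. (1 - u j) ^ z j)"
      using prod_one_minus_power_le_exp[OF u] unfolding Y_def by simp
    finally have "p z * (2 * a * Y z - a\<^sup>2 * (Y z + (Y z)\<^sup>2)) \<le> p z * (1 - (\<Prod>j<N. (1 - u j) ^ z j))"
      using nonneg[OF that] by (rule mult_left_mono)
    then show ?thesis by (simp add: algebra_simps)
  qed
  moreover have "unit_cube N (\<lambda>j. 1 - u j)"
    using u unfolding unit_cube_def by auto
  ultimately have "2 * a * y - a\<^sup>2 * y - a\<^sup>2 * S \<le> 1 - pgf N p (\<lambda>j. 1 - u j)"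
    using has_sum_mono has_sum_one_minus_pgf[OF law] by blast
  moreover have "y / (1 + K * y) = 2 * a * y - a\<^sup>2 * y - a\<^sup>2 * (K * y\<^sup>2)"
  proof -
    have "y / (1 + K * y) = a * y * (2 - a * (1 + K * y))"
      using a(2) unfolding a_def by simp
    then show ?thesis by (simp add: power2_eq_square algebra_simps)
  qed
  moreover have "a\<^sup>2 * S \<le> a\<^sup>2 * (K * y\<^sup>2)"
    using S by (simp add: mult_left_mono)
  ultimately show ?thesis unfolding K_def by linarith
qed

end

section \<open>Products of mean matrices\<close>

definition row_sum :: "nat \<Rightarrow> (nat \<Rightarrow> nat \<Rightarrow> real) \<Rightarrow> nat \<Rightarrow> real" where
  "row_sum N A i = (\<Sum>k<N. A i k)"

definition suffix_mass :: "nat \<Rightarrow> ('i \<Rightarrow> nat \<Rightarrow> nat \<Rightarrow> real) \<Rightarrow> 'i list \<Rightarrow> real" where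
  "suffix_mass N M ws = (\<Sum>n<length ws. mat_sum N (Mprod N M (drop n ws)))"

lemma suffix_mass_Cons:
  "suffix_mass N M (\<theta> # ws) = mat_sum N (Mprod N M (\<theta> # ws)) + suffix_mass N M ws"
  unfolding suffix_mass_def length_Cons sum.lessThan_Suc_shift by simp

lemma mat_sum_eq_sum_row_sum: "mat_sum N A = (\<Sum>i<N. row_sum N A i)"
  unfolding mat_sum_def row_sum_def ..

lemma row_sum_Mprod_Cons:
  "row_sum N (Mprod N M (\<theta> # ws)) i = (\<Sum>j<N. M \<theta> i j * row_sum N (Mprod N M ws) j)"
  unfolding row_sum_def by (simp add: mat_mult_def sum_distrib_left) (rule sum.swap)

lemma Mprod_append:
  assumes "i < N"
  shows "Mprod N M (xs @ ys) i k = (\<Sum>j<N. Mprod N M xs i j * Mprod N M ys j k)"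
  using assms
proof (induction xs arbitrary: i)
  case Nil
  have "(\<Sum>j<N. mat_id i j * Mprod N M ys j k) = (\<Sum>j<N. if j = i then Mprod N M ys j k else 0)"
    by (intro sum.cong) (auto simp: mat_id_def)
  then show ?case using Nil by simp
next
  case (Cons \<theta> xs)
  have "Mprod N M ((\<theta> # xs) @ ys) i k = (\<Sum>j<N. \<Sum>l<N. M \<theta> i j * Mprod N M xs j l * Mprod N M ys l k)"
    using Cons by (simp add: mat_mult_def sum_distrib_left mult.assoc)
  also have "\<dots> = (\<Sum>l<N. Mprod N M (\<theta> # xs) i l * Mprod N M ys l k)"
    by (subst sum.swap) (simp add: mat_mult_def sum_distrib_right)
  finally show ?case .
qed

lemma row_sum_Mprod_append:
  assumes "i < N"
  shows "row_sum N (Mprod N M (xs @ ys)) i = (\<Sum>j<N. Mprod N M xs i j * row_sum N (Mprod N M ys) j)"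
  unfolding row_sum_def Mprod_append[OF assms] sum_distrib_left by (rule sum.swap)

lemma Mprod_nonneg:
  assumes "\<And>\<theta> i k. i < N \<Longrightarrow> k < N \<Longrightarrow> 0 \<le> M \<theta> i k" "i < N" "k < N"
  shows "0 \<le> Mprod N M ws i k"
  using assms(2,3)
  by (induction ws arbitrary: i k) (auto simp: mat_id_def mat_mult_def assms(1) intro!: sum_nonneg)

lemma divide_add_mult_le:
  fixes K c r m y :: real
  assumes K: "0 \<le> K" and c: "1 \<le> c" and r: "0 \<le> r" "r \<le> m" and y: "r / c \<le> y"
  shows "r / (c + K * m) \<le> y / (1 + K * y)"
proof -
  have "0 \<le> K * r" using K r(1) by simp
  then have "1 \<le> c + K * r" "c + K * r \<le> c + K * m"
    using K c r(2) by (simp_all add: mult_left_mono)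
  then have "r / (c + K * m) \<le> r / (c + K * r)"
    using r(1) by (intro divide_left_mono) auto
  also have "\<dots> = (r / c) / (1 + K * (r / c))"
    using c by (simp add: field_simps)
  also have "\<dots> \<le> y / (1 + K * y)"
  proof -
    define x where "x = r / c"
    have x: "0 \<le> x" "x \<le> y" unfolding x_def using r c y by simp_all
    have "0 < 1 + K * x" "0 < 1 + K * y"
      using mult_nonneg_nonneg[OF K x(1)] mult_nonneg_nonneg[OF K order_trans[OF x]] by linarith+
    moreover have "x * (1 + K * y) \<le> y * (1 + K * x)"
      using x(2) by (simp add: algebra_simps)
    ultimately show ?thesis unfolding x_def[symmetric] by (simp add: divide_simps)
  qed
  finally show ?thesis .
qed

lemma mean_matrix_nonneg:
  assumes "\<And>\<theta> i. i < N \<Longrightarrow> bounded_moment_law N (f \<theta> i) B \<alpha>" "i < N"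
  shows "0 \<le> mean_matrix N f \<theta> i k"
  using assms bounded_moment_law.mean_nonneg unfolding mean_matrix_eq_mean by blast

lemma one_minus_pgf_comp_ge:
  assumes moments: "\<And>\<theta> i. i < N \<Longrightarrow> bounded_moment_law N (f \<theta> i) B \<alpha>" and N: "0 < N" and i: "i < N"
  defines "K \<equiv> (2 * B + 1) / \<alpha>\<^sup>2"
  shows "row_sum N (Mprod N (mean_matrix N f) ws) i / (1 + K * suffix_mass N (mean_matrix N f) ws)
         \<le> 1 - pgf_comp N f ws (\<lambda>_. 0) i"
  using i
proof (induction ws arbitrary: i)
  case Nil
  then show ?case by (simp add: row_sum_def mat_id_def suffix_mass_def)
next
  case (Cons \<theta> ws)
  let ?M = "mean_matrix N f"
  let ?r = "row_sum N (Mprod N ?M (\<theta> # ws)) i"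
  define c where "c = 1 + K * suffix_mass N ?M ws"
  define u where "u j = 1 - pgf_comp N f ws (\<lambda>_. 0) j" for j
  interpret bounded_moment_law N "f \<theta> i" B \<alpha> using moments Cons.prems .
  note entry_nonneg = Mprod_nonneg[where M = ?M, OF mean_matrix_nonneg[OF moments]]
  have mass_nonneg: "0 \<le> mat_sum N (Mprod N ?M xs)" for xs
    unfolding mat_sum_def using entry_nonneg by (intro sum_nonneg) auto
  have K: "0 \<le> K" unfolding K_def using bound_nonneg[OF N] by simp
  have c: "1 \<le> c"
    unfolding c_def suffix_mass_def using K mass_nonneg by (simp add: sum_nonneg)
  have r: "0 \<le> ?r" "?r \<le> mat_sum N (Mprod N ?M (\<theta> # ws))"
    unfolding mat_sum_eq_sum_row_sum row_sum_def using Cons.prems entry_nonneg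
    by (auto intro!: sum_nonneg member_le_sum simp del: Mprod.simps)
  have laws: "\<And>\<theta> i. i < N \<Longrightarrow> offspring_law N (f \<theta> i)"
    using moments bounded_moment_law.law by blast
  have zero: "unit_cube N (\<lambda>_. 0)" by (simp add: unit_cube_def)
  have u: "unit_cube N u"
    using pgf_comp_unit_cube[of N f, OF laws zero, of ws] unfolding u_def unit_cube_def by auto
  have "?r / c = (\<Sum>j<N. ?M \<theta> i j * (row_sum N (Mprod N ?M ws) j / c))"
    unfolding row_sum_Mprod_Cons by (simp add: sum_divide_distrib)
  also have "\<dots> \<le> (\<Sum>j<N. mean N (f \<theta> i) j * u j)"
    unfolding mean_matrix_eq_mean[symmetric] u_def c_def
    using Cons.IH Cons.prems mean_matrix_nonneg[OF moments] by (intro sum_mono mult_left_mono) auto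
  finally have "?r / (c + K * mat_sum N (Mprod N ?M (\<theta> # ws)))
                \<le> (\<Sum>j<N. mean N (f \<theta> i) j * u j) / (1 + K * (\<Sum>j<N. mean N (f \<theta> i) j * u j))"
    using K c r by (intro divide_add_mult_le)
  also have "\<dots> \<le> 1 - pgf N (f \<theta> i) (\<lambda>j. 1 - u j)"
    unfolding K_def by (rule one_minus_pgf_ge[OF u N])
  finally show ?case
    unfolding suffix_mass_Cons c_def using Cons.prems by (simp add: pgf_vec_def u_def algebra_simps)
qed

locale uniformly_allowable_family =
  fixes N :: nat and M :: "'i \<Rightarrow> nat \<Rightarrow> nat \<Rightarrow> real" and a :: real
  assumes nonneg: "\<And>\<theta> i k. i < N \<Longrightarrow> k < N \<Longrightarrow> 0 \<le> M \<theta> i k"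
    and row_has_pos: "\<And>\<theta> i. i < N \<Longrightarrow> \<exists>k<N. 0 < M \<theta> i k"
    and column_has_ge: "\<And>\<theta> k. k < N \<Longrightarrow> \<exists>i<N. a \<le> M \<theta> i k"
    and a_pos: "0 < a" and a_le_1: "a \<le> 1"
    and N_pos: "0 < N"
begin

abbreviation mass :: "'i list \<Rightarrow> real" where
  "mass ws \<equiv> mat_sum N (Mprod N M ws)"

abbreviation row :: "'i list \<Rightarrow> nat \<Rightarrow> real" where
  "row ws i \<equiv> row_sum N (Mprod N M ws) i"

lemma entry_nonneg: "i < N \<Longrightarrow> k < N \<Longrightarrow> 0 \<le> Mprod N M ws i k"
  by (rule Mprod_nonneg[where M = M, OF nonneg])

lemma row_nonneg: "i < N \<Longrightarrow> 0 \<le> row ws i"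
  unfolding row_sum_def by (intro sum_nonneg entry_nonneg) auto

lemma mass_nonneg: "0 \<le> mass ws"
  unfolding mat_sum_eq_sum_row_sum by (intro sum_nonneg row_nonneg) auto

lemma row_le_mass: "i < N \<Longrightarrow> row ws i \<le> mass ws"
  unfolding mat_sum_eq_sum_row_sum using row_nonneg by (intro member_le_sum) auto

lemma row_pos: "i < N \<Longrightarrow> 0 < row ws i"
proof (induction ws arbitrary: i)
  case Nil
  then show ?case by (simp add: row_sum_def mat_id_def)
next
  case (Cons \<theta> ws)
  obtain k where k: "k < N" "0 < M \<theta> i k" using row_has_pos Cons.prems by blast
  have "0 < M \<theta> i k * row ws k" using k Cons.IH by simp
  also have "\<dots> \<le> (\<Sum>j<N. M \<theta> i j * row ws j)"
    using k Cons.prems nonneg row_nonneg by (intro member_le_sum mult_nonneg_nonneg) auto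
  finally show ?case unfolding row_sum_Mprod_Cons .
qed

lemma mass_pos: "0 < mass ws"
  using row_pos[OF N_pos] row_le_mass[OF N_pos] by (rule less_le_trans)

lemma mass_Cons_ge: "a * mass ws \<le> mass (\<theta> # ws)"
proof -
  have "a * mass ws = (\<Sum>j<N. a * row ws j)"
    unfolding mat_sum_eq_sum_row_sum by (simp add: sum_distrib_left)
  also have "\<dots> \<le> (\<Sum>j<N. (\<Sum>i<N. M \<theta> i j) * row ws j)"
  proof (intro sum_mono mult_right_mono row_nonneg)
    fix j assume j: "j \<in> {..<N}"
    then obtain i where "i < N" "a \<le> M \<theta> i j" using column_has_ge by auto
    moreover have "M \<theta> i j \<le> (\<Sum>i<N. M \<theta> i j)" if "i < N" for i
      using that j nonneg by (intro member_le_sum) auto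
    ultimately show "a \<le> (\<Sum>i<N. M \<theta> i j)" by fastforce
  qed simp
  also have "\<dots> = mass (\<theta> # ws)"
    unfolding mat_sum_eq_sum_row_sum row_sum_Mprod_Cons sum_distrib_right
    by (subst sum.swap) (simp add: mult.assoc)
  finally show ?thesis .
qed

lemma mass_append_ge: "a ^ length xs * mass ys \<le> mass (xs @ ys)"
proof (induction xs)
  case (Cons \<theta> xs)
  then have "a * (a ^ length xs * mass ys) \<le> a * mass (xs @ ys)"
    using a_pos by simp
  also have "\<dots> \<le> mass (\<theta> # xs @ ys)" by (rule mass_Cons_ge)
  finally show ?case by simp
qed simp

lemma mass_append_le: "mass (xs @ ys) \<le> mass xs * mass ys"
proof -
  have "mass (xs @ ys) = (\<Sum>i<N. \<Sum>j<N. Mprod N M xs i j * row ys j)"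
    unfolding mat_sum_eq_sum_row_sum by (intro sum.cong refl row_sum_Mprod_append) simp
  also have "\<dots> \<le> (\<Sum>i<N. \<Sum>j<N. Mprod N M xs i j * mass ys)"
    using entry_nonneg row_le_mass by (intro sum_mono mult_left_mono) auto
  also have "\<dots> = mass xs * mass ys"
    unfolding mat_sum_def by (simp add: sum_distrib_right)
  finally show ?thesis .
qed

lemma row_block_ge:
  assumes \<beta>: "\<And>i j. i < N \<Longrightarrow> j < N \<Longrightarrow> \<beta> \<le> Mprod N M w i j" and i: "i < N"
  shows "\<beta> * row xs i * mass ys \<le> row (xs @ w @ ys) i"
proof -
  have "\<beta> * mass ys \<le> row (w @ ys) j" if j: "j < N" for j
  proof -
    have "\<beta> * mass ys = (\<Sum>l<N. \<beta> * row ys l)"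
      unfolding mat_sum_eq_sum_row_sum by (simp add: sum_distrib_left)
    also have "\<dots> \<le> (\<Sum>l<N. Mprod N M w j l * row ys l)"
      using \<beta> j row_nonneg by (intro sum_mono mult_right_mono) auto
    finally show ?thesis unfolding row_sum_Mprod_append[OF j] .
  qed
  then have "(\<Sum>j<N. Mprod N M xs i j * (\<beta> * mass ys)) \<le> (\<Sum>j<N. Mprod N M xs i j * row (w @ ys) j)"
    using i entry_nonneg by (intro sum_mono mult_left_mono) auto
  then show ?thesis
    unfolding row_sum_Mprod_append[OF i, where xs = xs and ys = "w @ ys"]
    by (simp add: row_sum_def sum_distrib_left sum_distrib_right algebra_simps)
qed

lemma mass_block_ge:
  assumes "\<And>i j. i < N \<Longrightarrow> j < N \<Longrightarrow> \<beta> \<le> Mprod N M w i j"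
  shows "\<beta> * mass xs * mass ys \<le> mass (xs @ w @ ys)"
proof -
  have "\<beta> * mass xs * mass ys = (\<Sum>i<N. \<beta> * row xs i * mass ys)"
    unfolding mat_sum_eq_sum_row_sum[of N "Mprod N M xs"] by (simp add: sum_distrib_left sum_distrib_right)
  also have "\<dots> \<le> mass (xs @ w @ ys)"
    unfolding mat_sum_eq_sum_row_sum[of N "Mprod N M (xs @ w @ ys)"]
    by (intro sum_mono row_block_ge[OF assms]) auto
  finally show ?thesis .
qed

lemma row_block_ge_mass:
  assumes \<beta>: "0 < \<beta>" "\<And>i j. i < N \<Longrightarrow> j < N \<Longrightarrow> \<beta> \<le> Mprod N M w i j" and i: "i < N"
  shows "\<exists>c>0. \<forall>ys. c * mass (xs @ w @ ys) \<le> row (xs @ w @ ys) i"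
proof (intro exI conjI allI)
  define c where "c = \<beta> * row xs i / (mass xs * mass w)"
  show "0 < c" unfolding c_def using \<beta>(1) row_pos[OF i] mass_pos by simp
  fix ys
  have "c * mass (xs @ w @ ys) \<le> c * (mass xs * (mass w * mass ys))"
    using mass_append_le[of xs "w @ ys"] mass_append_le[of w ys] mass_nonneg \<open>0 < c\<close>
    by (intro mult_left_mono) (auto intro: order_trans mult_left_mono)
  also have "\<dots> = \<beta> * row xs i * mass ys"
    unfolding c_def using mass_pos[of xs] mass_pos[of w] by (simp add: field_simps)
  also have "\<dots> \<le> row (xs @ w @ ys) i" by (rule row_block_ge[OF \<beta>(2) i])
  finally show "c * mass (xs @ w @ ys) \<le> row (xs @ w @ ys) i" .
qed

end

section \<open>Occurrences of a word in an ergodic environment\<close>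

definition occurs_at :: "'i list \<Rightarrow> (nat \<Rightarrow> 'i) \<Rightarrow> nat \<Rightarrow> bool" where
  "occurs_at w \<omega> t \<longleftrightarrow> (\<forall>j<length w. \<omega> (t + j) = w ! j)"

lemma shift_pow: "(shift ^^ n) \<omega> = (\<lambda>k. \<omega> (k + n))"
  by (induction n arbitrary: \<omega>) (auto simp: shift_def funpow_Suc_right)

lemma occurs_at_shift_pow: "occurs_at w ((shift ^^ n) \<omega>) t \<longleftrightarrow> occurs_at w \<omega> (t + n)"
  unfolding occurs_at_def shift_pow by (simp add: algebra_simps)

lemma occurs_at_shift: "occurs_at w (shift \<omega>) t \<longleftrightarrow> occurs_at w \<omega> (Suc t)"
  using occurs_at_shift_pow[of w 1 \<omega> t] by simp

lemma occurs_at_map_upt: "occurs_at w \<omega> t \<Longrightarrow> map \<omega> [t..<t + length w] = w"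
  unfolding occurs_at_def by (intro nth_equalityI) auto

definition avoids_until :: "'i list \<Rightarrow> nat \<Rightarrow> (nat \<Rightarrow> 'i) set" where
  "avoids_until w g = {\<omega>. \<forall>t<g. \<not> occurs_at w \<omega> t}"

lemma avoids_until_Suc:
  "avoids_until w (Suc g) = (UNIV - {\<omega>. occurs_at w \<omega> 0}) \<inter> shift -` avoids_until w g"
  unfolding avoids_until_def by (auto simp: occurs_at_shift less_Suc_eq_0_disj)

definition late_return :: "'i list \<Rightarrow> nat \<Rightarrow> (nat \<Rightarrow> 'i) set" where
  "late_return w g = {\<omega>. occurs_at w \<omega> 0} \<inter> shift -` avoids_until w g"

definition sublinear_gaps :: "(nat \<Rightarrow> bool) \<Rightarrow> bool" where
  "sublinear_gaps P \<longleftrightarrow> (\<forall>d>0. \<exists>n0. \<forall>n\<ge>n0. P n \<longrightarrow> (\<exists>t>n. t \<le> n + n div d \<and> P t))"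

locale ergodic_shift_space =
  fixes \<nu> :: "(nat \<Rightarrow> 'i::countable) measure"
  assumes ergodic: "ergodic_shift_measure \<nu>"
begin

sublocale prob_space \<nu>
  using ergodic unfolding ergodic_shift_measure_def by blast

lemma sets_eq: "sets \<nu> = sets (PiM UNIV (\<lambda>_::nat. count_space (UNIV :: 'i set)))"
  using ergodic unfolding ergodic_shift_measure_def by blast

lemma space_eq: "space \<nu> = UNIV"
  using sets_eq_imp_space_eq[OF sets_eq] by (simp add: space_PiM)

lemma sets_shift_vimage: "A \<in> sets \<nu> \<Longrightarrow> shift -` A \<in> sets \<nu>"
  using ergodic measurable_sets[of shift \<nu> \<nu> A] space_eq unfolding ergodic_shift_measure_def by auto

lemma prob_shift_vimage: "A \<in> sets \<nu> \<Longrightarrow> prob (shift -` A) = prob A"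
  using ergodic space_eq unfolding ergodic_shift_measure_def measure_def by auto

lemma UNIV_in_events: "UNIV \<in> events"
  using sets.top space_eq by metis

lemma shift_pow_vimage: "(shift ^^ Suc n) -` A = (shift ^^ n) -` (shift -` A)"
  by (simp only: funpow.simps(2) vimage_comp)

lemma sets_shift_pow_vimage: "A \<in> sets \<nu> \<Longrightarrow> (shift ^^ n) -` A \<in> sets \<nu>"
proof (induction n arbitrary: A)
  case (Suc n)
  then show ?case unfolding shift_pow_vimage by (simp add: sets_shift_vimage)
qed simp

lemma prob_shift_pow_vimage: "A \<in> sets \<nu> \<Longrightarrow> prob ((shift ^^ n) -` A) = prob A"
proof (induction n arbitrary: A)
  case (Suc n)
  then show ?case unfolding shift_pow_vimage by (simp add: sets_shift_vimage prob_shift_vimage)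
qed simp

lemma invariant_prob_0_or_1:
  assumes "A \<in> sets \<nu>" "shift -` A = A"
  shows "prob A = 0 \<or> prob A = 1"
  using ergodic assms space_eq unfolding ergodic_shift_measure_def
  by (auto simp: emeasure_eq_measure ennreal_1[symmetric] simp del: ennreal_1)

lemma sets_occurs_at: "{\<omega>. occurs_at w \<omega> t} \<in> sets \<nu>"
proof -
  have "{\<omega> :: nat \<Rightarrow> 'i. \<omega> j = x} \<in> sets \<nu>" for j x
    using measurable_sets[OF measurable_component_singleton[of j UNIV "\<lambda>_. count_space UNIV"], of "{x}"]
    by (simp add: sets_eq space_PiM vimage_def)
  then have "(\<Inter>j<length w. {\<omega>. \<omega> (t + j) = w ! j}) \<in> sets \<nu>"
    by (intro sets.countable_INT'' UNIV_in_events) auto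
  moreover have "{\<omega>. occurs_at w \<omega> t} = (\<Inter>j<length w. {\<omega>. \<omega> (t + j) = w ! j})"
    unfolding occurs_at_def by auto
  ultimately show ?thesis by simp
qed

lemma sets_never_occurs: "{\<omega>. \<forall>t. \<not> occurs_at w \<omega> t} \<in> sets \<nu>"
proof -
  have "(\<Inter>t. UNIV - {\<omega>. occurs_at w \<omega> t}) \<in> sets \<nu>"
    by (intro sets.countable_INT'' sets.Diff UNIV_in_events sets_occurs_at) auto
  moreover have "{\<omega>. \<forall>t. \<not> occurs_at w \<omega> t} = (\<Inter>t. UNIV - {\<omega>. occurs_at w \<omega> t})"
    by auto
  ultimately show ?thesis by simp
qed

lemma eventually_not_occurs_eq_UN:
  "{\<omega>. \<forall>\<^sub>F t in sequentially. \<not> occurs_at w \<omega> t} = (\<Union>k. (shift ^^ k) -` {\<omega>. \<forall>t. \<not> occurs_at w \<omega> t})"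
proof -
  have "(\<forall>n\<ge>k. Q n) \<longleftrightarrow> (\<forall>t. Q (t + k))" for Q :: "nat \<Rightarrow> bool" and k
    by (metis le_add2 le_add_diff_inverse2)
  then show ?thesis
    unfolding eventually_sequentially by (auto simp: occurs_at_shift_pow)
qed

lemma prob_eventually_not_occurs:
  "prob {\<omega>. \<forall>\<^sub>F t in sequentially. \<not> occurs_at w \<omega> t} = prob {\<omega>. \<forall>t. \<not> occurs_at w \<omega> t}"
proof -
  let ?A = "\<lambda>k. (shift ^^ k) -` {\<omega>. \<forall>t. \<not> occurs_at w \<omega> t}"
  have "incseq ?A"
    by (intro monoI) (auto simp: occurs_at_shift_pow le_iff_add, metis add.assoc add.commute)
  then have "(\<lambda>k. prob (?A k)) \<longlonglongrightarrow> prob (\<Union>k. ?A k)"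
    using sets_shift_pow_vimage[OF sets_never_occurs] by (intro finite_Lim_measure_incseq) auto
  then show ?thesis
    unfolding eventually_not_occurs_eq_UN prob_shift_pow_vimage[OF sets_never_occurs]
    by (simp add: LIMSEQ_const_iff)
qed

text \<open>The environments in which \<open>w\<close> occurs only finitely often form a shift-invariant set
  whose probability is that of never seeing \<open>w\<close>, hence less than \<open>1\<close>; by ergodicity it is null.\<close>
lemma AE_frequently_occurs:
  assumes pos: "0 < prob {\<omega>. occurs_at w \<omega> 0}"
  shows "AE \<omega> in \<nu>. \<exists>\<^sub>F t in sequentially. occurs_at w \<omega> t"
proof -
  define F where "F = {\<omega>. \<forall>\<^sub>F t in sequentially. \<not> occurs_at w \<omega> t}"
  have F_sets: "F \<in> sets \<nu>"
    unfolding F_def eventually_not_occurs_eq_UN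
    using sets_shift_pow_vimage[OF sets_never_occurs] by auto
  have "shift -` F = F"
  proof -
    have "(\<forall>\<^sub>F t in sequentially. \<not> occurs_at w \<omega> (Suc t))
          \<longleftrightarrow> (\<forall>\<^sub>F t in sequentially. \<not> occurs_at w \<omega> t)" for \<omega>
      using eventually_sequentially_Suc[of "\<lambda>t. \<not> occurs_at w \<omega> t"] by simp
    then show ?thesis unfolding F_def by (simp add: occurs_at_shift)
  qed
  moreover have "prob F < 1"
  proof -
    have "prob {\<omega>. \<forall>t. \<not> occurs_at w \<omega> t} + prob {\<omega>. occurs_at w \<omega> 0} \<le> 1"
      using finite_measure_Union[OF sets_never_occurs sets_occurs_at, of w w 0] prob_le_1
      by (metis (mono_tags, lifting) disjoint_iff mem_Collect_eq)
    then show ?thesis unfolding F_def prob_eventually_not_occurs using pos by linarith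
  qed
  ultimately have "prob F = 0"
    using invariant_prob_0_or_1[OF F_sets] by linarith
  then have "AE \<omega> in \<nu>. \<omega> \<in> UNIV - F"
    using AE_in_set_eq_1[OF sets.Diff[OF UNIV_in_events F_sets]] prob_compl[OF F_sets] space_eq by simp
  then show ?thesis unfolding F_def frequently_def by simp
qed

lemma sets_avoids_until: "avoids_until w g \<in> sets \<nu>"
proof -
  have "(\<Inter>t<g. UNIV - {\<omega>. occurs_at w \<omega> t}) \<in> sets \<nu>"
    by (intro sets.countable_INT'' sets.Diff UNIV_in_events sets_occurs_at) auto
  moreover have "avoids_until w g = (\<Inter>t<g. UNIV - {\<omega>. occurs_at w \<omega> t})"
    unfolding avoids_until_def by auto
  ultimately show ?thesis by simp
qed

lemma sets_late_return: "late_return w g \<in> sets \<nu>"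
  unfolding late_return_def by (intro sets.Int sets_occurs_at sets_shift_vimage sets_avoids_until)

text \<open>A Kac-type bound: by stationarity the probabilities telescope.\<close>
lemma sum_prob_late_return_le_1: "(\<Sum>g<G. prob (late_return w g)) \<le> 1"
proof -
  have step: "prob (late_return w g) = prob (avoids_until w g) - prob (avoids_until w (Suc g))" for g
  proof -
    have "prob (avoids_until w g) = prob (shift -` avoids_until w g)"
      using prob_shift_vimage[OF sets_avoids_until] by simp
    also have "shift -` avoids_until w g = avoids_until w (Suc g) \<union> late_return w g"
      unfolding avoids_until_Suc late_return_def by auto
    also have "prob \<dots> = prob (avoids_until w (Suc g)) + prob (late_return w g)"
      by (intro finite_measure_Union sets_avoids_until sets_late_return)
         (auto simp: avoids_until_Suc late_return_def)
    finally show ?thesis by simp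
  qed
  have "(\<Sum>g<G. prob (late_return w g)) = prob (avoids_until w 0) - prob (avoids_until w G)"
    unfolding step using sum_lessThan_telescope'[of "\<lambda>g. prob (avoids_until w g)" G] by simp
  also have "\<dots> \<le> 1"
    using prob_le_1[of "avoids_until w 0"] measure_nonneg[of \<nu> "avoids_until w G"] by linarith
  finally show ?thesis .
qed

lemma summable_prob_late_return:
  assumes d: "0 < d"
  shows "summable (\<lambda>n. prob ((shift ^^ n) -` late_return w (n div d)))"
proof (rule summableI_nonneg_bounded)
  fix m
  have "(\<Sum>n<m. prob ((shift ^^ n) -` late_return w (n div d))) \<le> (\<Sum>n<m * d. prob (late_return w (n div d)))"
    unfolding prob_shift_pow_vimage[OF sets_late_return] using d by (intro sum_mono2) auto
  also have "\<dots> = (\<Sum>g<m. \<Sum>n\<in>{g * d..<g * d + d}. prob (late_return w (n div d)))"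
    by (rule sum.nat_group[symmetric])
  also have "\<dots> = (\<Sum>g<m. real d * prob (late_return w g))"
  proof (intro sum.cong refl)
    fix g
    have "n div d = g" if "n \<in> {g * d..<g * d + d}" for n
      using d that by (auto simp: div_nat_eqI mult.commute)
    then show "(\<Sum>n\<in>{g * d..<g * d + d}. prob (late_return w (n div d))) = real d * prob (late_return w g)"
      by simp
  qed
  also have "\<dots> \<le> real d"
    using sum_prob_late_return_le_1[of w m] unfolding sum_distrib_left[symmetric]
    by (simp add: mult_left_le)
  finally show "(\<Sum>n<m. prob ((shift ^^ n) -` late_return w (n div d))) \<le> real d" .
qed simp

lemma AE_gap_le_div:
  assumes d: "0 < d"
  shows "AE \<omega> in \<nu>. \<exists>n0. \<forall>n\<ge>n0. occurs_at w \<omega> n \<longrightarrow> (\<exists>t>n. t \<le> n + n div d \<and> occurs_at w \<omega> t)"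
proof -
  have "AE \<omega> in \<nu>. eventually (\<lambda>n. \<omega> \<in> space \<nu> - (shift ^^ n) -` late_return w (n div d)) sequentially"
    using summable_prob_late_return[OF d] sets_late_return sets_shift_pow_vimage
    by (intro borel_cantelli_AE1) (auto simp: emeasure_eq_measure)
  then show ?thesis
  proof (rule AE_mp, intro AE_I2 impI)
    fix \<omega> assume "eventually (\<lambda>n. \<omega> \<in> space \<nu> - (shift ^^ n) -` late_return w (n div d)) sequentially"
    then obtain n0 where n0: "\<And>n. n \<ge> n0 \<Longrightarrow> (shift ^^ n) \<omega> \<notin> late_return w (n div d)"
      unfolding eventually_sequentially by blast
    have "\<exists>t>n. t \<le> n + n div d \<and> occurs_at w \<omega> t" if "n \<ge> n0" "occurs_at w \<omega> n" for n
    proof -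
      from n0[OF that(1)] that(2) obtain s where "s < n div d" "occurs_at w \<omega> (Suc (s + n))"
        unfolding late_return_def avoids_until_def by (auto simp: occurs_at_shift_pow occurs_at_shift)
      then show ?thesis by (intro exI[of _ "Suc (s + n)"]) auto
    qed
    then show "\<exists>n0. \<forall>n\<ge>n0. occurs_at w \<omega> n \<longrightarrow> (\<exists>t>n. t \<le> n + n div d \<and> occurs_at w \<omega> t)"
      by blast
  qed
qed

lemma AE_sublinear_gaps: "AE \<omega> in \<nu>. sublinear_gaps (occurs_at w \<omega>)"
proof -
  have "AE \<omega> in \<nu>. \<forall>d. 0 < d \<longrightarrow> (\<exists>n0. \<forall>n\<ge>n0. occurs_at w \<omega> n \<longrightarrow> (\<exists>t>n. t \<le> n + n div d \<and> occurs_at w \<omega> t))"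
    unfolding AE_all_countable using AE_gap_le_div by simp
  then show ?thesis unfolding sublinear_gaps_def by simp
qed

end

section \<open>Suffix masses along a typical environment\<close>

lemma map_upt_split:
  assumes "x \<le> y" "y \<le> z"
  shows "map \<omega> [x..<z] = map \<omega> [x..<y] @ map \<omega> [y..<z]"
  using assms upt_add_eq_append[of x y "z - y"] by simp

lemma recent_occurrence:
  fixes P :: "nat \<Rightarrow> bool"
  assumes gap: "\<forall>n\<ge>n0. P n \<longrightarrow> (\<exists>t>n. t \<le> n + n div d \<and> P t)"
    and t0: "P t0" "n0 \<le> t0" "t0 + L \<le> n"
  shows "\<exists>t. P t \<and> t0 \<le> t \<and> t + L \<le> n \<and> n < t + L + t div d"
proof -
  define S where "S = {t. P t \<and> t0 \<le> t \<and> t + L \<le> n}"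
  have S: "finite S" "t0 \<in> S"
    unfolding S_def using t0 by (auto intro: finite_subset[of _ "{..n}"])
  define t where "t = Max S"
  have t: "P t" "t0 \<le> t" "t + L \<le> n"
    using Max_in[OF S(1)] S(2) unfolding t_def S_def by auto
  obtain t' where t': "t < t'" "t' \<le> t + t div d" "P t'"
    using gap t(1,2) t0(2) by (meson order.trans)
  then have "t' \<notin> S"
    using Max_ge[OF S(1)] unfolding t_def by fastforce
  then have "n < t' + L"
    using t t' unfolding S_def by auto
  then show ?thesis
    using t t'(2) by (intro exI[of _ t]) auto
qed

lemma exists_power_div_ge_exp:
  fixes a c :: real
  assumes a: "0 < a" "a \<le> 1" and c: "0 < c"
  shows "\<exists>d>0. \<forall>t. exp (- (c * real t)) \<le> a ^ (t div d)"
proof (intro exI conjI allI)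
  define L where "L = - ln a"
  define d where "d = nat \<lceil>L / c\<rceil> + 1"
  have L: "0 \<le> L" unfolding L_def using a by simp
  show d: "0 < d" unfolding d_def by simp
  fix t
  have "L / c \<le> real d" unfolding d_def by linarith
  then have "L \<le> c * real d" by (metis c mult.commute pos_divide_le_eq)
  then have "real (t div d) * L \<le> real t / real d * (c * real d)"
    using L by (intro mult_mono of_nat_div_le_of_nat) auto
  also have "\<dots> = c * real t" using d by simp
  finally have "- (c * real t) \<le> real (t div d) * ln a" unfolding L_def by simp
  then have "exp (- (c * real t)) \<le> exp (real (t div d) * ln a)" by simp
  also have "\<dots> = a ^ (t div d)" using a(1) by (simp add: exp_of_nat_mult)
  finally show "exp (- (c * real t)) \<le> a ^ (t div d)" .
qed

lemma eventually_exp_le_of_ln_div_tendsto: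
  fixes x :: "nat \<Rightarrow> real"
  assumes lim: "(\<lambda>n. ln (x n) / real n) \<longlonglongrightarrow> l" and "c < l" and pos: "\<And>n. 0 < x n"
  shows "eventually (\<lambda>n. exp (c * real n) \<le> x n) sequentially"
  using order_tendstoD(1)[OF lim \<open>c < l\<close>] eventually_gt_at_top[of 0]
proof eventually_elim
  case (elim n)
  then have "exp (c * real n) < exp (ln (x n))" by (simp add: field_simps)
  then show ?case using pos[of n] by simp
qed

lemma strictly_pos_entry_ge:
  assumes "0 < N" "strictly_pos N A"
  shows "\<exists>\<beta>>0. \<forall>i j. i < N \<longrightarrow> j < N \<longrightarrow> \<beta> \<le> A i j"
proof (intro exI conjI allI impI)
  let ?E = "(\<lambda>(i, j). A i j) ` ({..<N} \<times> {..<N})"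
  show "Min ?E \<le> A i j" if "i < N" "j < N" for i j
    using that by (intro Min_le) auto
  have "Min ?E \<in> ?E"
    using assms(1) by (intro Min_in) auto
  then show "0 < Min ?E"
    using assms(2) unfolding strictly_pos_def by auto
qed

lemma divide_one_plus_le:
  fixes K R c r S Y :: real
  assumes "0 \<le> K" "0 \<le> R" "0 < c" "1 \<le> Y" "c * Y \<le> r" "0 \<le> S" "S \<le> R * Y"
  shows "c / (1 + K * R) \<le> r / (1 + K * S)"
proof -
  have "K * S \<le> K * (R * Y)"
    using assms by (intro mult_left_mono) auto
  then have "c * (K * S) \<le> c * (K * (R * Y))"
    using assms by (intro mult_left_mono) auto
  moreover have "c * 1 \<le> c * Y"
    using assms by (intro mult_left_mono) auto
  ultimately have "c * (1 + K * S) \<le> c * Y + c * (K * (R * Y))"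
    by (simp add: distrib_left)
  also have "\<dots> = (1 + K * R) * (c * Y)"
    by (simp add: algebra_simps)
  also have "\<dots> \<le> (1 + K * R) * r"
    using assms by (intro mult_left_mono) auto
  finally have "c * (1 + K * S) \<le> r * (1 + K * R)" by (simp add: mult.commute)
  moreover have "0 < 1 + K * R" "0 < 1 + K * S"
    using assms by (simp_all add: add_pos_nonneg)
  ultimately show ?thesis by (simp add: divide_simps)
qed

context uniformly_allowable_family
begin

lemma mass_window_ge:
  assumes \<beta>: "0 \<le> \<beta>" "\<And>i j. i < N \<Longrightarrow> j < N \<Longrightarrow> \<beta> \<le> Mprod N M w i j"
    and occ: "occurs_at w \<omega> t" and n: "t + length w \<le> n" "n \<le> m"
  shows "\<beta> * mass (map \<omega> [0..<t]) * (a ^ (n - (t + length w)) * mass (map \<omega> [n..<m]))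
         \<le> mass (map \<omega> [0..<m])"
proof -
  let ?ys = "map \<omega> [t + length w..<n] @ map \<omega> [n..<m]"
  have "map \<omega> [0..<m] = map \<omega> [0..<t] @ map \<omega> [t..<m]"
    using n by (intro map_upt_split) auto
  also have "map \<omega> [t..<m] = map \<omega> [t..<t + length w] @ map \<omega> [t + length w..<m]"
    using n by (intro map_upt_split) auto
  also have "map \<omega> [t + length w..<m] = ?ys"
    using n by (intro map_upt_split) auto
  also have "map \<omega> [t..<t + length w] = w"
    by (rule occurs_at_map_upt[OF occ])
  finally have split: "map \<omega> [0..<m] = map \<omega> [0..<t] @ w @ ?ys" .
  have "a ^ (n - (t + length w)) * mass (map \<omega> [n..<m]) \<le> mass ?ys"
    using mass_append_ge[of "map \<omega> [t + length w..<n]"] by simp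
  then have "\<beta> * mass (map \<omega> [0..<t]) * (a ^ (n - (t + length w)) * mass (map \<omega> [n..<m]))
             \<le> \<beta> * mass (map \<omega> [0..<t]) * mass ?ys"
    using \<beta>(1) mass_nonneg by (intro mult_left_mono) auto
  also have "\<dots> \<le> mass (map \<omega> [0..<m])"
    unfolding split by (rule mass_block_ge[OF \<beta>(2)])
  finally show ?thesis .
qed

text \<open>If the last occurrence \<open>t\<close> of \<open>w\<close> before \<open>n\<close> is recent (\<open>n - t = O(t / d)\<close>), the
  exponential growth of the prefix up to \<open>t\<close> beats the column bound \<open>a\<close> on \<open>[t, n)\<close>,
  so the suffix starting at \<open>n\<close> carries an exponentially small share of the whole product.\<close>
lemma mass_suffix_decay:
  assumes \<beta>: "0 < \<beta>" "\<And>i j. i < N \<Longrightarrow> j < N \<Longrightarrow> \<beta> \<le> Mprod N M w i j"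
    and occ: "occurs_at w \<omega> t" and n: "t + length w \<le> n" "n < t + length w + t div d" "n \<le> m"
    and growth: "exp (\<gamma> * real t) \<le> mass (map \<omega> [0..<t])"
    and power: "exp (- (\<gamma> / 2 * real t)) \<le> a ^ (t div d)"
    and \<gamma>: "0 < \<gamma>"
  shows "\<beta> * exp (\<gamma> * (real n - real (length w)) / 4) * mass (map \<omega> [n..<m]) \<le> mass (map \<omega> [0..<m])"
proof -
  let ?X = "mass (map \<omega> [n..<m])"
  have "a ^ (t div d) \<le> a ^ (n - (t + length w))"
    using n(2) a_pos a_le_1 by (intro power_decreasing) auto
  then have power': "exp (- (\<gamma> / 2 * real t)) \<le> a ^ (n - (t + length w))"
    using power by linarith
  have "real n \<le> 2 * real t + real (length w)"
    using n(2) div_le_dividend[of t d] by linarith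
  then have "\<gamma> * (real n - real (length w)) \<le> \<gamma> * (2 * real t)"
    using \<gamma> by (intro mult_left_mono) auto
  then have "exp (\<gamma> * (real n - real (length w)) / 4) \<le> exp (\<gamma> * real t) * exp (- (\<gamma> / 2 * real t))"
    unfolding exp_add[symmetric] by simp
  also have "\<dots> \<le> mass (map \<omega> [0..<t]) * a ^ (n - (t + length w))"
    using growth power' mass_nonneg by (intro mult_mono) auto
  finally have "\<beta> * exp (\<gamma> * (real n - real (length w)) / 4) * ?X
                \<le> \<beta> * (mass (map \<omega> [0..<t]) * a ^ (n - (t + length w))) * ?X"
    using \<beta>(1) mass_nonneg by (intro mult_right_mono mult_left_mono) auto
  also have "\<dots> \<le> mass (map \<omega> [0..<m])"
    using mass_window_ge[OF less_imp_le[OF \<beta>(1)] \<beta>(2) occ n(1,3)] by (simp add: mult.assoc)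
  finally show ?thesis .
qed

lemma mass_suffix_le_power:
  assumes "n \<le> m"
  shows "mass (map \<omega> [n..<m]) \<le> (1 / a) ^ n * mass (map \<omega> [0..<m])"
proof -
  have "map \<omega> [0..<m] = map \<omega> [0..<n] @ map \<omega> [n..<m]"
    using assms by (intro map_upt_split) auto
  then have "a ^ n * mass (map \<omega> [n..<m]) \<le> mass (map \<omega> [0..<m])"
    using mass_append_ge[of "map \<omega> [0..<n]" "map \<omega> [n..<m]"] by simp
  then show ?thesis
    using a_pos by (simp add: field_simps)
qed

lemma mass_suffix_le_geometric:
  assumes \<beta>: "0 < \<beta>" "\<And>i j. i < N \<Longrightarrow> j < N \<Longrightarrow> \<beta> \<le> Mprod N M w i j"
    and \<gamma>: "0 < \<gamma>" and power: "\<And>t. exp (- (\<gamma> / 2 * real t)) \<le> a ^ (t div d)"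
    and gap: "\<forall>n\<ge>n0. occurs_at w \<omega> n \<longrightarrow> (\<exists>t>n. t \<le> n + n div d \<and> occurs_at w \<omega> t)"
    and growth: "\<And>n. n1 \<le> n \<Longrightarrow> exp (\<gamma> * real n) \<le> mass (map \<omega> [0..<n])"
    and t0: "occurs_at w \<omega> t0" "n0 + n1 \<le> t0" and n: "t0 + length w \<le> n" "n \<le> m"
  shows "mass (map \<omega> [n..<m])
         \<le> exp (\<gamma> * real (length w) / 4) / \<beta> * exp (- \<gamma> / 4) ^ n * mass (map \<omega> [0..<m])"
proof -
  let ?C = "exp (\<gamma> * real (length w) / 4) / \<beta> * exp (- \<gamma> / 4) ^ n"
  obtain t where t: "occurs_at w \<omega> t" "t0 \<le> t" "t + length w \<le> n" "n < t + length w + t div d"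
    using recent_occurrence[OF gap t0(1)] t0(2) n(1) by auto
  have decay: "\<beta> * exp (\<gamma> * (real n - real (length w)) / 4) * mass (map \<omega> [n..<m]) \<le> mass (map \<omega> [0..<m])"
    by (rule mass_suffix_decay[OF \<beta> t(1) t(3,4) n(2) growth power \<gamma>]) (use t(2) t0(2) in auto)
  let ?E = "exp (\<gamma> * (real n - real (length w)) / 4)"
  have "\<beta> * ?E * ?C = 1"
  proof -
    have "exp (- \<gamma> / 4) ^ n = exp (real n * (- \<gamma> / 4))"
      by (rule exp_of_nat_mult[symmetric])
    moreover have "?E * exp (\<gamma> * real (length w) / 4) * exp (real n * (- \<gamma> / 4)) = 1"
      by (simp add: exp_add[symmetric] field_simps)
    ultimately show ?thesis using \<beta>(1) by (simp add: field_simps)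
  qed
  then have "mass (map \<omega> [n..<m]) = (\<beta> * ?E * ?C) * mass (map \<omega> [n..<m])"
    by simp
  also have "\<dots> = ?C * (\<beta> * ?E * mass (map \<omega> [n..<m]))"
    by (simp only: mult.assoc mult.commute mult.left_commute)
  also have "\<dots> \<le> ?C * mass (map \<omega> [0..<m])"
    using decay \<beta>(1) by (intro mult_left_mono) auto
  finally show ?thesis .
qed

lemma suffix_mass_map_upt: "suffix_mass N M (map \<omega> [0..<m]) = (\<Sum>n<m. mass (map \<omega> [n..<m]))"
  unfolding suffix_mass_def by (simp add: drop_map)

text \<open>The suffix masses are bounded by a summable sequence times the total mass: by the column bound
  \<open>a\<close> for short prefixes, and geometrically once \<open>w\<close> has occurred late enough.\<close>
lemma suffix_mass_le_mass:
  assumes \<beta>: "0 < \<beta>" "\<And>i j. i < N \<Longrightarrow> j < N \<Longrightarrow> \<beta> \<le> Mprod N M w i j"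
    and \<gamma>: "0 < \<gamma>" and power: "\<And>t. exp (- (\<gamma> / 2 * real t)) \<le> a ^ (t div d)"
    and freq: "\<exists>\<^sub>F t in sequentially. occurs_at w \<omega> t"
    and gap: "\<forall>n\<ge>n0. occurs_at w \<omega> n \<longrightarrow> (\<exists>t>n. t \<le> n + n div d \<and> occurs_at w \<omega> t)"
    and growth: "\<And>n. n1 \<le> n \<Longrightarrow> exp (\<gamma> * real n) \<le> mass (map \<omega> [0..<n])"
  shows "\<exists>R\<ge>0. \<forall>m. suffix_mass N M (map \<omega> [0..<m]) \<le> R * mass (map \<omega> [0..<m])"
proof -
  obtain t0 where t0: "occurs_at w \<omega> t0" "n0 + n1 \<le> t0"
    using freq unfolding frequently_sequentially by blast
  define C where "C = exp (\<gamma> * real (length w) / 4) / \<beta>"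
  define b where "b n = (if n < t0 + length w then (1 / a) ^ (t0 + length w) else C * exp (- \<gamma> / 4) ^ n)" for n
  have b_nonneg: "0 \<le> b n" for n
    unfolding b_def C_def using a_pos \<beta>(1) by simp
  have bound: "mass (map \<omega> [n..<m]) \<le> b n * mass (map \<omega> [0..<m])" if "n < m" for n m
  proof (cases "n < t0 + length w")
    case True
    have "(1 / a) ^ n \<le> (1 / a) ^ (t0 + length w)"
      using True a_pos a_le_1 by (intro power_increasing) auto
    then show ?thesis
      unfolding b_def using True that mass_suffix_le_power[of n m \<omega>] mass_nonneg
      by (auto intro: order_trans mult_right_mono)
  next
    case False
    then show ?thesis
      unfolding b_def C_def using mass_suffix_le_geometric[OF \<beta> \<gamma> power gap growth t0] that by simp
  qed
  have "summable b"
  proof -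
    have "eventually (\<lambda>n. b n = C * exp (- \<gamma> / 4) ^ n) sequentially"
      unfolding b_def eventually_sequentially by (intro exI[of _ "t0 + length w"]) auto
    moreover have "summable (\<lambda>n. C * exp (- \<gamma> / 4) ^ n)"
      using \<gamma> by (intro summable_mult summable_geometric) auto
    ultimately show ?thesis using summable_cong[of b] by simp
  qed
  show ?thesis
  proof (intro exI conjI allI)
    show "0 \<le> suminf b" using \<open>summable b\<close> b_nonneg by (rule suminf_nonneg)
    fix m
    have "suffix_mass N M (map \<omega> [0..<m]) \<le> (\<Sum>n<m. b n * mass (map \<omega> [0..<m]))"
      unfolding suffix_mass_map_upt using bound by (intro sum_mono) auto
    also have "\<dots> \<le> suminf b * mass (map \<omega> [0..<m])"
      unfolding sum_distrib_right[symmetric] using \<open>summable b\<close> b_nonneg mass_nonneg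
      by (intro mult_right_mono sum_le_suminf) auto
    finally show "suffix_mass N M (map \<omega> [0..<m]) \<le> suminf b * mass (map \<omega> [0..<m])" .
  qed
qed

lemma row_ge_mass_after_occurrence:
  assumes \<beta>: "0 < \<beta>" "\<And>i j. i < N \<Longrightarrow> j < N \<Longrightarrow> \<beta> \<le> Mprod N M w i j"
    and T: "occurs_at w \<omega> T" and k: "k < N"
  shows "\<exists>c>0. \<forall>m\<ge>T + length w. c * mass (map \<omega> [0..<m]) \<le> row (map \<omega> [0..<m]) k"
proof -
  obtain c where c: "0 < c" "\<And>ys. c * mass (map \<omega> [0..<T] @ w @ ys) \<le> row (map \<omega> [0..<T] @ w @ ys) k"
    using row_block_ge_mass[OF \<beta> k] by blast
  have "map \<omega> [0..<m] = map \<omega> [0..<T] @ w @ map \<omega> [T + length w..<m]" if "T + length w \<le> m" for m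
  proof -
    have "map \<omega> [0..<m] = map \<omega> [0..<T] @ map \<omega> [T..<T + length w] @ map \<omega> [T + length w..<m]"
      using that map_upt_split[of 0 T m \<omega>] map_upt_split[of T "T + length w" m \<omega>] by simp
    then show ?thesis unfolding occurs_at_map_upt[OF T] .
  qed
  then show ?thesis using c by metis
qed

lemma survival_ratio_bounded_below:
  assumes w: "strictly_pos N (Mprod N M w)"
    and freq: "\<exists>\<^sub>F t in sequentially. occurs_at w \<omega> t"
    and gaps: "sublinear_gaps (occurs_at w \<omega>)"
    and \<gamma>: "0 < \<gamma>" and growth: "eventually (\<lambda>n. exp (\<gamma> * real n) \<le> mass (map \<omega> [0..<n])) sequentially"
    and K: "0 \<le> K" and k: "k < N"
  shows "\<exists>c>0. eventually (\<lambda>m. c \<le> row (map \<omega> [0..<m]) k / (1 + K * suffix_mass N M (map \<omega> [0..<m])))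
                      sequentially"
proof -
  obtain \<beta> where \<beta>: "0 < \<beta>" "\<And>i j. i < N \<Longrightarrow> j < N \<Longrightarrow> \<beta> \<le> Mprod N M w i j"
    using strictly_pos_entry_ge[OF N_pos w] by blast
  obtain d where d: "0 < d" "\<And>t. exp (- (\<gamma> / 2 * real t)) \<le> a ^ (t div d)"
    using exists_power_div_ge_exp[OF a_pos a_le_1, of "\<gamma> / 2"] \<gamma> by auto
  obtain n0 where gap: "\<forall>n\<ge>n0. occurs_at w \<omega> n \<longrightarrow> (\<exists>t>n. t \<le> n + n div d \<and> occurs_at w \<omega> t)"
    using gaps d(1) unfolding sublinear_gaps_def by blast
  obtain n1 where n1: "\<And>n. n1 \<le> n \<Longrightarrow> exp (\<gamma> * real n) \<le> mass (map \<omega> [0..<n])"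
    using growth unfolding eventually_sequentially by blast
  obtain R where R: "0 \<le> R" "\<And>m. suffix_mass N M (map \<omega> [0..<m]) \<le> R * mass (map \<omega> [0..<m])"
    using suffix_mass_le_mass[OF \<beta> \<gamma> d(2) freq gap n1] by blast
  obtain T where T: "occurs_at w \<omega> T"
    using freq unfolding frequently_sequentially by blast
  obtain c where c: "0 < c" "\<And>m. T + length w \<le> m \<Longrightarrow> c * mass (map \<omega> [0..<m]) \<le> row (map \<omega> [0..<m]) k"
    using row_ge_mass_after_occurrence[OF \<beta> T k] by blast
  have "c / (1 + K * R) \<le> row (map \<omega> [0..<m]) k / (1 + K * suffix_mass N M (map \<omega> [0..<m]))"
    if "max (T + length w) n1 \<le> m" for m
  proof (rule divide_one_plus_le)
    have "1 \<le> exp (\<gamma> * real m)" using \<gamma> by simp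
    then show "1 \<le> mass (map \<omega> [0..<m])" using n1[of m] that by linarith
    show "0 \<le> suffix_mass N M (map \<omega> [0..<m])"
      unfolding suffix_mass_def using mass_nonneg by (intro sum_nonneg)
  qed (use K c R that in auto)
  moreover have "0 < c / (1 + K * R)"
    using c(1) K R(1) by (simp add: add_pos_nonneg)
  ultimately show ?thesis
    unfolding eventually_sequentially by blast
qed

end

section \<open>Extinction probabilities\<close>

lemma unif_allowable_mean_ge:
  assumes unif: "unif_allowable N f"
    and laws: "\<And>\<theta> i. i < N \<Longrightarrow> offspring_law N (f \<theta> i)"
    and means: "\<And>\<theta> i k. i < N \<Longrightarrow> k < N \<Longrightarrow> (\<lambda>z. real (z k) * f \<theta> i z) summable_on vecs N"
  shows "\<exists>\<alpha>>0. \<forall>\<theta> i k. i < N \<longrightarrow> k < N \<longrightarrow> 0 < mean_matrix N f \<theta> i k \<longrightarrow> \<alpha> \<le> mean_matrix N f \<theta> i k"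
proof -
  let ?S = "{(\<Sum>\<^sub>\<infinity>z\<in>{z\<in>vecs N. z k \<noteq> 0}. f \<theta> i z) | \<theta> i k. i < N \<and> k < N \<and> mean_matrix N f \<theta> i k > 0}"
  obtain \<alpha> where \<alpha>: "0 < \<alpha>" "\<alpha> < Inf ?S"
    using unif unfolding unif_allowable_def by blast
  have "\<alpha> \<le> mean_matrix N f \<theta> i k" if "i < N" "k < N" "0 < mean_matrix N f \<theta> i k" for \<theta> i k
  proof -
    have "bdd_below ?S"
      by (intro bdd_belowI[of _ 0]) (auto intro!: infsum_nonneg offspring_law_nonneg[OF laws])
    then have "Inf ?S \<le> (\<Sum>\<^sub>\<infinity>z\<in>{z\<in>vecs N. z k \<noteq> 0}. f \<theta> i z)"
      using that by (intro cInf_lower) auto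
    also have "\<dots> \<le> mean_matrix N f \<theta> i k"
      unfolding mean_matrix_def
    proof (rule infsum_mono_neutral)
      show "f \<theta> i summable_on {z \<in> vecs N. z k \<noteq> 0}"
        using offspring_law_summable[OF laws[OF that(1)]] by (rule summable_on_subset) auto
      show "(\<lambda>z. real (z k) * f \<theta> i z) summable_on vecs N"
        using means that by blast
      fix z assume "z \<in> {z \<in> vecs N. z k \<noteq> 0} \<inter> vecs N"
      then have "1 \<le> real (z k)" "0 \<le> f \<theta> i z"
        using offspring_law_nonneg[OF laws[OF that(1)]] by auto
      then show "f \<theta> i z \<le> real (z k) * f \<theta> i z"
        using mult_right_mono[of 1 "real (z k)" "f \<theta> i z"] by simp
    qed auto
    finally show ?thesis using \<alpha>(2) by linarith
  qed
  then show ?thesis using \<alpha>(1) by blast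
qed

lemma bounded_moment_law_of_second_deriv:
  assumes "offspring_law N (f \<theta> i)"
    and "\<And>j. j < N \<Longrightarrow> (\<lambda>z. real (z j) * f \<theta> i z) summable_on vecs N"
    and "\<And>j. j < N \<Longrightarrow> second_deriv_term j j f \<theta> i summable_on vecs N \<and> second_deriv N f \<theta> i j j < B"
    and "\<And>j. j < N \<Longrightarrow> 0 < mean_matrix N f \<theta> i j \<Longrightarrow> \<alpha> \<le> mean_matrix N f \<theta> i j"
    and "0 < \<alpha>"
  shows "bounded_moment_law N (f \<theta> i) B \<alpha>"
  using assms unfolding second_deriv_def second_deriv_term_def mean_matrix_eq_mean
  by unfold_locales (simp_all add: less_imp_le)

lemma uniformly_allowable_family_mean_matrix:
  assumes moments: "\<And>\<theta> i. i < N \<Longrightarrow> bounded_moment_law N (f \<theta> i) B \<alpha>"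
    and allowable: "\<And>\<theta>. allowable N (mean_matrix N f \<theta>)" and N: "0 < N"
  shows "uniformly_allowable_family N (mean_matrix N f) (min \<alpha> 1)"
proof
  have mean: "0 \<le> mean_matrix N f \<theta> i k" "0 < mean_matrix N f \<theta> i k \<Longrightarrow> \<alpha> \<le> mean_matrix N f \<theta> i k"
    if "i < N" "k < N" for \<theta> i k
    using moments[OF that(1)] that(2) unfolding mean_matrix_eq_mean
    by (auto intro: bounded_moment_law.mean_nonneg bounded_moment_law.mean_ge)
  show "0 \<le> mean_matrix N f \<theta> i k" if "i < N" "k < N" for \<theta> i k
    using mean(1)[OF that] .
  show "\<exists>i<N. min \<alpha> 1 \<le> mean_matrix N f \<theta> i k" if "k < N" for \<theta> k
    using allowable[of \<theta>] that mean(2) unfolding allowable_def by (meson min.coboundedI1)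
  show "\<exists>k<N. 0 < mean_matrix N f \<theta> i k" if "i < N" for \<theta> i
    using allowable[of \<theta>] that unfolding allowable_def by blast
  show "0 < min \<alpha> 1"
    using moments[OF N] bounded_moment_law.\<alpha>_pos by fastforce
qed (use N in auto)

lemma extinction_prob_less_1_of_recurrent_word:
  assumes moments: "\<And>\<theta> i. i < N \<Longrightarrow> bounded_moment_law N (f \<theta> i) B \<alpha>" and N: "0 < N"
    and family: "uniformly_allowable_family N (mean_matrix N f) a"
    and w: "strictly_pos N (Mprod N (mean_matrix N f) w)"
    and freq: "\<exists>\<^sub>F t in sequentially. occurs_at w \<omega> t" and gaps: "sublinear_gaps (occurs_at w \<omega>)"
    and \<gamma>: "0 < \<gamma>"
    and growth: "eventually (\<lambda>n. exp (\<gamma> * real n) \<le> mat_sum N (Mprod N (mean_matrix N f) (map \<omega> [0..<n])))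
                   sequentially"
    and k: "k < N"
  shows "extinction_prob N f \<omega> k < 1"
proof -
  have "0 \<le> (2 * B + 1) / \<alpha>\<^sup>2"
    using bounded_moment_law.bound_nonneg[OF moments[OF N] N] by simp
  then obtain c where c: "0 < c" and ratio: "eventually (\<lambda>m. c \<le> row_sum N (Mprod N (mean_matrix N f) (map \<omega> [0..<m])) k
      / (1 + (2 * B + 1) / \<alpha>\<^sup>2 * suffix_mass N (mean_matrix N f) (map \<omega> [0..<m]))) sequentially"
    using uniformly_allowable_family.survival_ratio_bounded_below[OF family w freq gaps \<gamma> growth _ k] by blast
  from ratio have "eventually (\<lambda>m. pgf_comp N f (map \<omega> [0..<m]) (\<lambda>_. 0) k \<le> 1 - c) sequentially"
  proof eventually_elim
    case (elim m)
    then show ?case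
      using one_minus_pgf_comp_ge[where f = f and B = B and \<alpha> = \<alpha> and ws = "map \<omega> [0..<m]", OF moments N k]
      by linarith
  qed
  moreover have "\<And>\<theta> i. i < N \<Longrightarrow> offspring_law N (f \<theta> i)"
    using moments bounded_moment_law.law by blast
  ultimately have "extinction_prob N f \<omega> k \<le> 1 - c"
    using extinction_prob_le[of N f] k by blast
  then show ?thesis using c by simp
qed

theorem corollary4p5:
  fixes N :: nat
    and \<nu> :: "(nat \<Rightarrow> 'i::countable) measure"
    and f :: "'i \<Rightarrow> nat \<Rightarrow> (nat \<Rightarrow> nat) \<Rightarrow> real"
    and Mbound :: real
    and lyap :: real
  assumes N2: "2 \<le> N"
    and erg: "ergodic_shift_measure \<nu>"
    and laws: "\<forall>\<theta> i. i < N \<longrightarrow> offspring_law N (f \<theta> i)"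
    and finite_means: "\<forall>\<theta> i k. i < N \<longrightarrow> k < N \<longrightarrow>
                         (\<lambda>z. real (z k) * f \<theta> i z) summable_on vecs N"
    and good: "good N \<nu> (mean_matrix N f)"
    and unif: "unif_allowable N f"
    and second: "\<forall>\<theta> k i j. k < N \<longrightarrow> i < N \<longrightarrow> j < N \<longrightarrow>
                   second_deriv_term i j f \<theta> k summable_on vecs N
                   \<and> second_deriv N f \<theta> k i j < Mbound"
    and lyap_lim: "AE \<omega> in \<nu>. (\<lambda>n. ln (mat_sum N (Mprod N (mean_matrix N f) (map \<omega> [0..<n]))) / real n)
                      \<longlonglongrightarrow> lyap"
    and lyap_pos: "lyap > 0"
  shows "AE \<omega> in \<nu>. \<forall>k<N. extinction_prob N f \<omega> k < 1"
proof -
  have N: "0 < N" using N2 by simp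
  obtain \<alpha> where \<alpha>: "0 < \<alpha>"
    and mean_ge: "\<And>\<theta> i k. i < N \<Longrightarrow> k < N \<Longrightarrow> 0 < mean_matrix N f \<theta> i k \<Longrightarrow> \<alpha> \<le> mean_matrix N f \<theta> i k"
    using unif_allowable_mean_ge[OF unif] laws finite_means by blast
  have moments: "bounded_moment_law N (f \<theta> i) Mbound \<alpha>" if "i < N" for \<theta> i
    using laws finite_means second mean_ge \<alpha> that by (intro bounded_moment_law_of_second_deriv) blast+
  have family: "uniformly_allowable_family N (mean_matrix N f) (min \<alpha> 1)"
    using uniformly_allowable_family_mean_matrix[where f = f and B = Mbound, OF moments _ N] good
    unfolding good_def by blast
  interpret ergodic_shift_space \<nu> by unfold_locales (rule erg)
  obtain w where w: "strictly_pos N (Mprod N (mean_matrix N f) w)" "0 < prob {\<omega>. occurs_at w \<omega> 0}"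
    using good unfolding good_def occurs_at_def space_eq by auto
  have "AE \<omega> in \<nu>. eventually (\<lambda>n. exp (lyap / 2 * real n)
                      \<le> mat_sum N (Mprod N (mean_matrix N f) (map \<omega> [0..<n]))) sequentially"
    using lyap_lim
    by eventually_elim
       (rule eventually_exp_le_of_ln_div_tendsto,
        use lyap_pos uniformly_allowable_family.mass_pos[OF family] in auto)
  with AE_frequently_occurs[OF w(2)] AE_sublinear_gaps[of w] show ?thesis
    by eventually_elim
       (blast intro: extinction_prob_less_1_of_recurrent_word[where f = f and B = Mbound and \<alpha> = \<alpha>,
                       OF moments N family w(1)] half_gt_zero[OF lyap_pos])
qed

end
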